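(* Let $A$ be a unital $C^*$-algebra. Suppose $e_1,\dots,e_n\in A$ are mutually orthogonal projections and $u\in U(A)$ is a unitary such that $u^*e_iu=e_{i+1}$ for $i=1,\dots,n$, where $e_{n+1}=e_1$. Let $p=\sum_{i=1}^n e_i$. Then the $C^*$-subalgebra of $A$ generated by $\{e_i:1\le i\le n\}$, $\{e_iue_{i+1}:1\le i\le n-1\}$ and $pup$ is isomorphic to $C(X)\otimes M_n$ for some compact subset $X\subset S^1$. *)

theory Defs
  imports "HOL-Analysis.Analysis"
begin

locale unital_cstar_algebra =
  fixes sc :: "complex \<Rightarrow> 'a::{banach, real_normed_algebra_1} \<Rightarrow> 'a"
    and st :: "'a \<Rightarrow> 'a"
  assumes sc_add_right: "sc c (x + y) = sc c x + sc c y"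
    and sc_add_left: "sc (c + d) x = sc c x + sc d x"
    and sc_sc: "sc c (sc d x) = sc (c * d) x"
    and sc_of_real: "sc (complex_of_real r) x = scaleR r x"
    and norm_sc: "norm (sc c x) = cmod c * norm x"
    and sc_mult_left: "sc c x * y = sc c (x * y)"
    and sc_mult_right: "x * sc c y = sc c (x * y)"
    and st_st: "st (st x) = x"
    and st_add: "st (x + y) = st x + st y"
    and st_sc: "st (sc c x) = sc (cnj c) (st x)"
    and st_mult: "st (x * y) = st y * st x"
    and cstar_id: "norm (st x * x) = (norm x)\<^sup>2"

definition projection :: "('a::ring_1 \<Rightarrow> 'a) \<Rightarrow> 'a \<Rightarrow> bool" where
  "projection st e \<longleftrightarrow> st e = e \<and> e * e = e"

definition unitary :: "('a::ring_1 \<Rightarrow> 'a) \<Rightarrow> 'a \<Rightarrow> bool" where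
  "unitary st u \<longleftrightarrow> st u * u = 1 \<and> u * st u = 1"

text \<open>*-subalgebras (not required to contain the unit) and the C*-subalgebra
  generated by a set S: the smallest norm-closed *-subalgebra containing S.\<close>
definition star_subalgebra ::
  "(complex \<Rightarrow> 'a::ring_1 \<Rightarrow> 'a) \<Rightarrow> ('a \<Rightarrow> 'a) \<Rightarrow> 'a set \<Rightarrow> bool" where
  "star_subalgebra sc st B \<longleftrightarrow> 0 \<in> B \<and>
     (\<forall>x\<in>B. \<forall>y\<in>B. x + y \<in> B \<and> x * y \<in> B) \<and>
     (\<forall>c. \<forall>x\<in>B. sc c x \<in> B) \<and> (\<forall>x\<in>B. st x \<in> B)"

definition cstar_generated ::
  "(complex \<Rightarrow> 'a::{real_normed_algebra_1} \<Rightarrow> 'a) \<Rightarrow> ('a \<Rightarrow> 'a) \<Rightarrow> 'a set \<Rightarrow> 'a set" where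
  "cstar_generated sc st S = \<Inter>{B. S \<subseteq> B \<and> closed B \<and> star_subalgebra sc st B}"

text \<open>The C*-algebra C(X) \<otimes> M_n = M_n(C(X)): continuous functions from X to
  n\<times>n complex matrices, matrices given by entries indexed by 0..n-1; entries
  outside X or outside the index range are normalised to 0.\<close>
definition CX_Mn :: "complex set \<Rightarrow> nat \<Rightarrow> (complex \<Rightarrow> nat \<Rightarrow> nat \<Rightarrow> complex) set" where
  "CX_Mn X n = {F. (\<forall>i<n. \<forall>j<n. continuous_on X (\<lambda>x. F x i j)) \<and>
                   (\<forall>x i j. (x \<notin> X \<or> \<not> (i < n \<and> j < n)) \<longrightarrow> F x i j = 0)}"

definition CX_Mn_add where "CX_Mn_add F G = (\<lambda>x i j. F x i j + G x i j)"
definition CX_Mn_mult where "CX_Mn_mult n F G = (\<lambda>x i j. \<Sum>k<n. F x i k * G x k j)"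
definition CX_Mn_scale where "CX_Mn_scale c F = (\<lambda>x i j. c * F x i j)"
definition CX_Mn_star where "CX_Mn_star F = (\<lambda>x i j. cnj (F x j i))"

definition star_iso_CX_Mn ::
  "(complex \<Rightarrow> 'a::ring_1 \<Rightarrow> 'a) \<Rightarrow> ('a \<Rightarrow> 'a) \<Rightarrow> 'a set \<Rightarrow> complex set \<Rightarrow> nat
     \<Rightarrow> ('a \<Rightarrow> complex \<Rightarrow> nat \<Rightarrow> nat \<Rightarrow> complex) \<Rightarrow> bool" where
  "star_iso_CX_Mn sc st B X n \<phi> \<longleftrightarrow> bij_betw \<phi> B (CX_Mn X n) \<and>
     (\<forall>a\<in>B. \<forall>b\<in>B. \<phi> (a + b) = CX_Mn_add (\<phi> a) (\<phi> b) \<and>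
                    \<phi> (a * b) = CX_Mn_mult n (\<phi> a) (\<phi> b)) \<and>
     (\<forall>c. \<forall>a\<in>B. \<phi> (sc c a) = CX_Mn_scale c (\<phi> a)) \<and>
     (\<forall>a\<in>B. \<phi> (st a) = CX_Mn_star (\<phi> a))"

end

theory Submission
  imports Defs "HOL-Computational_Algebra.Fundamental_Theorem_Algebra"
begin

text \<open>Put E k = e (k mod n + 1). The partial isometries R j = u^j E j = E 0 u^j (j < n) satisfy
  R j R k* = (if j = k then E 0 else 0) and R j* R j = E j, so they form the first row of a system
  of n \<times> n matrix units, and w = u^n E 0 is a unitary of the corner E 0 A E 0. Compressing
  x to the matrix (R i x R j*) identifies the generated C*-algebra with the n \<times> n matrices over
  the C*-algebra C*(w) generated by w in the corner, and C*(w) is isomorphic to C(X) for a compact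
  X on the unit circle playing the role of the spectrum of w. For the last step, the norm of a
  *-polynomial in w equals the sup norm of its symbol over X: one inequality holds by the choice
  of X, the other because the norm of a normal element is bounded by its spectral radius, which
  is proved by averaging resolvents over roots of unity. Stone-Weierstrass gives surjectivity.\<close>

section \<open>Invertibility in a corner\<close>

definition corner_inv :: "'a::ring_1 \<Rightarrow> 'a \<Rightarrow> bool" where
  "corner_inv e y \<longleftrightarrow> (\<exists>w. e * w = w \<and> w * e = w \<and> y * w = e \<and> w * y = e)"

definition corner_inverse :: "'a::ring_1 \<Rightarrow> 'a \<Rightarrow> 'a" where
  "corner_inverse e y = (THE w. e * w = w \<and> w * e = w \<and> y * w = e \<and> w * y = e)"

lemma corner_inverse_unique:
  fixes e :: "'a::ring_1"
  assumes "e * q = q" "q * e = q" "y * q = e" "q * y = e"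
    and "e * w = w" "w * e = w" "y * w = e" "w * y = e"
  shows "q = w"
proof -
  have "q = q * (y * w)" using assms by simp
  also have "\<dots> = (q * y) * w" by (simp add: mult.assoc)
  finally show ?thesis using assms by simp
qed

lemma corner_inverse:
  fixes e :: "'a::ring_1"
  assumes "corner_inv e y"
  defines "w \<equiv> corner_inverse e y"
  shows "e * w = w" "w * e = w" "y * w = e" "w * y = e"
proof -
  obtain v where v: "e * v = v \<and> v * e = v \<and> y * v = e \<and> v * y = e"
    using assms(1) unfolding corner_inv_def by blast
  have "e * w = w \<and> w * e = w \<and> y * w = e \<and> w * y = e"
    unfolding w_def corner_inverse_def
    by (rule theI[of _ v]) (use v corner_inverse_unique in blast)+
  then show "e * w = w" "w * e = w" "y * w = e" "w * y = e" by auto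
qed

lemma corner_inv_idem: "e * e = e \<Longrightarrow> corner_inv e e"
  unfolding corner_inv_def by blast

lemma corner_inv_mult:
  fixes e :: "'a::ring_1"
  assumes "corner_inv e a" "corner_inv e b" "a * e = a" "e * b = b"
  shows "corner_inv e (a * b)"
proof -
  obtain q where q: "e * q = q" "q * e = q" "a * q = e" "q * a = e"
    using assms(1) unfolding corner_inv_def by blast
  obtain w where w: "e * w = w" "w * e = w" "b * w = e" "w * b = e"
    using assms(2) unfolding corner_inv_def by blast
  have "a * b * (w * q) = a * (b * w) * q" "w * q * (a * b) = w * (q * a) * b"
    by (simp_all add: mult.assoc)
  then have "a * b * (w * q) = e" "w * q * (a * b) = e"
    using q w assms by (simp_all add: mult.assoc)
  moreover have "e * (w * q) = w * q" "w * q * e = w * q"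
    using q w by (simp_all add: mult.assoc[symmetric]) (simp add: mult.assoc)
  ultimately show ?thesis unfolding corner_inv_def by blast
qed

lemma corner_inv_commuting_factor:
  fixes e :: "'a::ring_1"
  assumes "corner_inv e (a * b)" "a * b = b * a"
    and "e * a = a" "a * e = a" "e * b = b" "b * e = b"
  shows "corner_inv e a"
proof -
  obtain w where w: "e * w = w" "w * e = w" "a * b * w = e" "w * (a * b) = e"
    using assms(1) unfolding corner_inv_def by blast
  have r: "a * (b * w) = e" using w by (simp add: mult.assoc)
  have l: "(w * b) * a = e" using w assms(2) by (simp add: mult.assoc)
  have "w * b = w * b * (a * (b * w))" using assms r by (simp add: mult.assoc)
  also have "\<dots> = (w * b * a) * (b * w)" by (simp add: mult.assoc)
  also have "\<dots> = b * w" using l assms by (simp add: mult.assoc[symmetric])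
  finally have "w * b = b * w" .
  moreover have "e * (b * w) = b * w" "b * w * e = b * w"
    using w assms by (simp_all add: mult.assoc[symmetric]) (simp add: mult.assoc)
  ultimately show ?thesis unfolding corner_inv_def using r l by metis
qed

lemma corner_inv_cancel_left:
  fixes e :: "'a::ring_1"
  assumes "corner_inv e a" "corner_inv e (a * y)" "e * y = y" "a * e = a" "e * a = a"
  shows "corner_inv e y"
proof -
  obtain w where w: "e * w = w" "w * e = w" "a * w = e" "w * a = e"
    using assms(1) unfolding corner_inv_def by blast
  have "corner_inv e w" unfolding corner_inv_def using w assms(4) by (metis mult.assoc)
  then have "corner_inv e (w * (a * y))"
    by (rule corner_inv_mult[OF _ assms(2)]) (use w assms in \<open>simp_all add: mult.assoc[symmetric]\<close>)
  moreover have "w * (a * y) = y" using w assms by (simp add: mult.assoc[symmetric])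
  ultimately show ?thesis by simp
qed

lemma corner_inv_neumann:
  fixes e y :: "'a::{banach, real_normed_algebra_1}"
  assumes e: "e * e = e" "e * y = y" "y * e = y" and ny: "norm y < 1"
  shows "corner_inv e (e - y)"
proof -
  have "summable (\<lambda>n. norm y ^ n)" using ny by (simp add: summable_geometric)
  then have "summable (\<lambda>n. y ^ n)"
    using summable_comparison_test'[where g = "\<lambda>n. norm y ^ n" and f = "\<lambda>n. y ^ n" and N = 0]
    by (simp add: norm_power_ineq)
  then obtain s where ss: "(\<lambda>n. y ^ n) sums s" by (auto simp: summable_def)
  have "(\<lambda>n. y ^ Suc n) sums (y * s)" using sums_mult[OF ss, of y] by simp
  from sums_Suc[OF this] have "y * s + 1 = s" using ss sums_unique2 by fastforce
  have "(\<lambda>n. y ^ Suc n) sums (s * y)"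
    using sums_mult2[OF ss, of y] by (simp add: power_Suc2 del: power_Suc)
  from sums_Suc[OF this] have "s * y + 1 = s" using ss sums_unique2 by fastforce
  have inv: "(1 - y) * s = 1" "s * (1 - y) = 1"
    using \<open>y * s + 1 = s\<close> \<open>s * y + 1 = s\<close> by (simp_all add: algebra_simps)
  have ee: "e - y = e * (1 - y)" "e - y = (1 - y) * e"
    using e by (simp_all add: right_diff_distrib left_diff_distrib)
  have r: "(e - y) * (e * s * e) = e"
  proof -
    have "(e - y) * (e * s * e) = ((e - y) * e) * s * e" by (simp add: mult.assoc)
    also have "(e - y) * e = e - y" using e by (simp add: left_diff_distrib)
    also have "(e - y) * s * e = e * ((1 - y) * s) * e" using ee(1) by (simp add: mult.assoc)
    finally show ?thesis using inv e by simp
  qed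
  have l: "(e * s * e) * (e - y) = e"
  proof -
    have "(e * s * e) * (e - y) = e * s * (e * (e - y))" by (simp add: mult.assoc)
    also have "e * (e - y) = e - y" using e by (simp add: right_diff_distrib)
    also have "e * s * (e - y) = e * (s * (1 - y)) * e" using ee(2) by (simp add: mult.assoc)
    finally show ?thesis using inv e by simp
  qed
  have "e * (e * s * e) = e * s * e" "(e * s * e) * e = e * s * e"
    using e by (simp_all add: mult.assoc[symmetric]) (simp add: mult.assoc)
  then show ?thesis unfolding corner_inv_def using r l by blast
qed

lemma norm_lt_one_if_near_left_inverse:
  fixes m b e :: "'a::real_normed_algebra"
  assumes "m * (e - b) = e" "m * e = m" "e * b = b" "norm (m - e) < 1/2"
  shows "norm b < 1"
proof -
  have "b = (m - e) - (m - e) * b"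
    using assms(1-3) by (simp add: algebra_simps)
  then have "norm b \<le> norm (m - e) + norm ((m - e) * b)"
    by (metis norm_triangle_ineq4)
  also have "\<dots> \<le> norm (m - e) * (1 + norm b)"
    by (simp add: distrib_left norm_mult_ineq)
  also have "\<dots> < 1/2 * (1 + norm b)"
    using assms(4) by (intro mult_strict_right_mono) (simp_all add: add_pos_nonneg)
  finally show ?thesis by simp
qed

context unital_cstar_algebra
begin

lemma sc_zero_left [simp]: "sc 0 x = 0"
  using sc_of_real[of 0 x] by simp

lemma sc_one [simp]: "sc 1 x = x"
  using sc_of_real[of 1 x] by simp

lemma sc_zero_right [simp]: "sc c 0 = 0"
  using sc_add_right[of c 0 0] by simp

lemma sc_minus_right: "sc c (- x) = - sc c x"
  using sc_add_right[of c x "-x"] minus_unique[of "sc c x" "sc c (-x)"] by simp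

lemma sc_diff_right: "sc c (x - y) = sc c x - sc c y"
  using sc_add_right[of c x "-y"] sc_minus_right[of c y] by simp

lemma sc_minus_left: "sc (-c) x = - sc c x"
  using sc_add_left[of c "-c" x] minus_unique[of "sc c x" "sc (-c) x"] by simp

lemma sc_diff_left: "sc (c - d) x = sc c x - sc d x"
  using sc_add_left[of c "-d" x] sc_minus_left[of d x] by simp

lemma sc_sum_left: "sc (sum f A) x = (\<Sum>i\<in>A. sc (f i) x)"
  by (induct A rule: infinite_finite_induct) (auto simp: sc_add_left)

lemma sc_mult_both: "sc c x * sc d y = sc (c * d) (x * y)"
  by (simp add: sc_mult_left sc_mult_right sc_sc mult.commute)

lemma st_zero [simp]: "st 0 = 0"
  using st_add[of 0 0] by simp

lemma st_sum: "st (sum f A) = (\<Sum>i\<in>A. st (f i))"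
  by (induct A rule: infinite_finite_induct) (auto simp: st_add)

lemma st_one [simp]: "st 1 = 1"
  using st_mult[of "st 1" 1] by (simp add: st_st)

lemma st_power: "st (x ^ n) = st x ^ n"
  by (induct n) (simp_all add: st_mult power_Suc2[symmetric] del: power_Suc2)

lemma bounded_linear_sc: "bounded_linear (sc c)"
  by (rule bounded_linear_intro[where K = "cmod c"])
    (simp_all add: sc_add_right sc_of_real[symmetric] sc_sc mult.commute norm_sc)

lemma norm_st [simp]: "norm (st x) = norm x"
proof -
  have le: "norm y \<le> norm (st y)" for y
  proof (cases "y = 0")
    case False
    have "norm y * norm y = norm (st y * y)" by (simp add: cstar_id power2_eq_square)
    also have "\<dots> \<le> norm (st y) * norm y" by (rule norm_mult_ineq)
    finally show ?thesis using False by simp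
  qed simp
  show ?thesis using le[of x] le[of "st x"] by (simp add: st_st)
qed

lemma bounded_linear_st: "bounded_linear st"
proof (rule bounded_linear_intro[where K = 1])
  show "st (r *\<^sub>R x) = r *\<^sub>R st x" for r x
    using st_sc[of "complex_of_real r" x] by (simp add: sc_of_real)
qed (simp_all add: st_add)

lemma norm_square_normal:
  assumes "x * st x = st x * x"
  shows "norm (x * x) = norm x ^ 2"
proof -
  define h where "h = st x * x"
  have "st h = h" unfolding h_def by (simp add: st_mult st_st)
  have "st (x * x) * (x * x) = st x * (st x * x) * x" by (simp add: st_mult mult.assoc)
  also have "\<dots> = st x * (x * st x) * x" by (simp only: assms)
  also have "\<dots> = h * h" unfolding h_def by (simp add: mult.assoc)
  finally have "norm (x * x) ^ 2 = norm (h * h)" using cstar_id[of "x * x"] by simp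
  also have "\<dots> = norm h ^ 2" using cstar_id[of h] \<open>st h = h\<close> by simp
  also have "norm h = norm x ^ 2" unfolding h_def by (simp add: cstar_id)
  finally show ?thesis by (metis power2_eq_iff_nonneg norm_ge_zero zero_le_power2)
qed

lemma norm_power_two_power_normal:
  assumes "x * st x = st x * x"
  shows "norm (x ^ (2 ^ k)) = norm x ^ (2 ^ k)"
proof (induct k)
  case (Suc k)
  define y where "y = x ^ (2 ^ k)"
  have "x ^ m * st x = st x * x ^ m" for m
    by (rule power_commuting_commutes[OF assms])
  then have "st x ^ m * x ^ m = x ^ m * st x ^ m" for m
    by (intro power_commuting_commutes) simp
  then have "y * st y = st y * y" unfolding y_def st_power by simp
  moreover have "x ^ (2 ^ Suc k) = y * y"
    unfolding y_def by (simp add: power_mult[symmetric] power2_eq_square[symmetric] mult.commute)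
  ultimately have "norm (x ^ (2 ^ Suc k)) = norm y ^ 2" using norm_square_normal by simp
  also have "\<dots> = norm x ^ (2 ^ Suc k)"
    using Suc unfolding y_def by (simp add: power_mult[symmetric] mult.commute)
  finally show ?case .
qed simp

lemma corner_inv_sc:
  assumes "corner_inv e y" "c \<noteq> 0"
  shows "corner_inv e (sc c y)"
proof -
  obtain w where "e * w = w" "w * e = w" "y * w = e" "w * y = e"
    using assms(1) unfolding corner_inv_def by blast
  then have "e * sc (1/c) w = sc (1/c) w" "sc (1/c) w * e = sc (1/c) w"
    "sc c y * sc (1/c) w = e" "sc (1/c) w * sc c y = e"
    using assms(2) by (simp_all add: sc_mult_both sc_mult_left sc_mult_right sc_sc)
  then show ?thesis unfolding corner_inv_def by blast
qed

end

section \<open>The norm of a normal element and its spectrum\<close>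

lemma radii_around:
  fixes x r1 L :: real
  assumes "0 < x" "x < r1" "0 < L"
  obtains r' r where "0 \<le> r'" "r' < x" "x < r" "r \<le> r1" "L * (r - r') < 1/4"
proof -
  define d where "d = min (min (r1 - x) x) (1 / (4 * L + 1))"
  have d: "0 < d" "d \<le> r1 - x" "d \<le> x" "d \<le> 1 / (4 * L + 1)"
    using assms unfolding d_def by auto
  then have "d * (4 * L + 1) \<le> 1" using assms(3) by (simp add: pos_le_divide_eq)
  then have "L * d < 1/4" using d(1) by (simp add: algebra_simps)
  then show ?thesis using d by (intro that[of "x - d/2" "x + d/2"]) simp_all
qed

lemma power_two_power_less:
  fixes q c :: real
  assumes "0 \<le> q" "q < 1" "0 < c"
  obtains k where "q ^ 2 ^ k < c"
proof -
  have "(\<lambda>k. q ^ k) \<longlonglongrightarrow> 0" using assms by (intro LIMSEQ_realpow_zero)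
  then obtain k0 where k0: "\<And>k. k \<ge> k0 \<Longrightarrow> q ^ k < c"
    using order_tendstoD(2)[of _ 0 sequentially c] assms(3) by (auto simp: eventually_sequentially)
  have "k0 \<le> 2 ^ k0" by (simp add: less_exp less_imp_le)
  then show ?thesis using k0 that by blast
qed

definition root_unity :: "nat \<Rightarrow> complex" where
  "root_unity N = exp (2 * complex_of_real pi * \<i> / of_nat N)"

lemma norm_root_unity_power_mult: "cmod (root_unity N ^ k * t) = cmod t"
proof -
  have "2 * complex_of_real pi * \<i> / of_nat N = \<i> * complex_of_real (2 * pi / N)" by simp
  then have "cmod (root_unity N) = 1" unfolding root_unity_def by (simp only: norm_exp_i_times)
  then show ?thesis by (simp add: norm_mult norm_power)
qed

lemma root_unity_power_self:
  assumes "N \<ge> 1"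
  shows "root_unity N ^ N = 1"
proof -
  have "root_unity N ^ N = exp (of_nat N * (2 * complex_of_real pi * \<i> / of_nat N))"
    unfolding root_unity_def by (rule exp_of_nat_mult[symmetric])
  also have "of_nat N * (2 * complex_of_real pi * \<i> / of_nat N) = \<i> * (of_nat 1 * (of_real pi * 2))"
    using assms by (simp add: field_simps)
  also have "exp \<dots> = 1" by (rule exp_2pi_1_nat)
  finally show ?thesis .
qed

lemma sum_root_unity_powers:
  assumes "N \<ge> 1" "m < N"
  shows "(\<Sum>k<N. (root_unity N ^ m) ^ k) = (if m = 0 then of_nat N else 0)"
proof (cases "m = 0")
  case False
  define q where "q = root_unity N ^ m"
  have "q \<noteq> 1"
  proof
    assume "q = 1"
    then have "exp (2 * complex_of_real pi * \<i> * of_nat m / of_nat N) = 1"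
      unfolding q_def root_unity_def
      by (simp add: exp_of_nat_mult[symmetric] mult.commute mult.left_commute)
    then have "N dvd m" using complex_root_unity_eq_1[OF assms(1)] by simp
    then show False using False assms(2) by (simp add: nat_dvd_not_less)
  qed
  moreover have "q ^ N = 1"
    unfolding q_def using root_unity_power_self[OF assms(1)]
    by (simp add: power_mult[symmetric] mult.commute) (simp add: power_mult)
  ultimately show ?thesis using False unfolding q_def[symmetric] by (simp add: geometric_sum)
qed simp

context unital_cstar_algebra
begin

text \<open>The resolvent in the reciprocal variable, (e - t a)^-1 = (1/t) (1/t e - a)^-1; it is junk
  wherever e - t a is not invertible in the corner.\<close>

definition corner_resolvent :: "'a \<Rightarrow> 'a \<Rightarrow> complex \<Rightarrow> 'a" where
  "corner_resolvent e a t = corner_inverse e (e - sc t a)"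

lemma corner_resolvent_diff:
  assumes "corner_inv e (e - sc t a)" "corner_inv e (e - sc s a)"
  defines "G \<equiv> corner_resolvent e a"
  shows "G t - G s = sc (t - s) (G t * a * G s)"
proof -
  note Gt = corner_inverse[OF assms(1), folded corner_resolvent_def G_def]
  note Gs = corner_inverse[OF assms(2), folded corner_resolvent_def G_def]
  have "G t - G s = G t * ((e - sc s a) * G s) - (G t * (e - sc t a)) * G s"
    using Gt Gs by simp
  also have "\<dots> = G t * ((e - sc s a) - (e - sc t a)) * G s"
    by (simp add: mult.assoc right_diff_distrib left_diff_distrib)
  also have "(e - sc s a) - (e - sc t a) = sc (t - s) a" by (simp add: sc_diff_left)
  finally show ?thesis by (simp add: sc_mult_left sc_mult_right)
qed

lemma continuous_on_corner_resolvent: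
  assumes "\<And>t. t \<in> K \<Longrightarrow> corner_inv e (e - sc t a)"
  defines "G \<equiv> corner_resolvent e a"
  shows "continuous_on K G"
  unfolding continuous_on_iff
proof (intro ballI allI impI)
  fix s and \<epsilon> :: real assume s: "s \<in> K" and \<epsilon>: "0 < \<epsilon>"
  define A where "A = norm a"
  define g where "g = norm (G s)"
  have Ag: "A \<ge> 0" "g \<ge> 0" unfolding A_def g_def by simp_all
  define \<delta> where "\<delta> = min (1 / (2 * A * g + 1)) (\<epsilon> / (2 * g * g * A + 1))"
  have p: "2 * A * g + 1 > 0" "2 * g * g * A + 1 > 0" using Ag by (simp_all add: add_nonneg_pos)
  show "\<exists>\<delta>>0. \<forall>t\<in>K. dist t s < \<delta> \<longrightarrow> dist (G t) (G s) < \<epsilon>"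
  proof (intro exI conjI ballI impI)
    show "\<delta> > 0" using \<epsilon> p by (simp add: \<delta>_def)
    fix t assume t: "t \<in> K" "dist t s < \<delta>"
    define d where "d = cmod (t - s)"
    have d: "d \<ge> 0" "d * (2 * A * g + 1) \<le> 1" "d * (2 * g * g * A + 1) < \<epsilon>"
      using t p unfolding d_def \<delta>_def
      by (simp_all add: dist_norm pos_le_divide_eq pos_less_divide_eq)
    have "norm (G t * a * G s) \<le> norm (G t) * A * g"
      unfolding A_def g_def by (metis norm_mult_ineq mult_right_mono norm_ge_zero order_trans)
    then have "d * norm (G t * a * G s) \<le> d * (norm (G t) * A * g)"
      using d(1) by (rule mult_left_mono)
    then have n1: "norm (G t - G s) \<le> d * (norm (G t) * A * g)"
      using corner_resolvent_diff[OF assms(1)[OF t(1)] assms(1)[OF s]]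
      unfolding d_def G_def by (simp add: norm_sc)
    have "norm (G t) \<le> g + norm (G t - G s)" unfolding g_def by (metis norm_triangle_sub)
    also have "\<dots> \<le> g + norm (G t) * (d * A * g)" using n1 by (simp add: algebra_simps)
    also have "norm (G t) * (d * A * g) \<le> norm (G t) * (1/2)"
      using d Ag by (intro mult_left_mono) (simp_all add: algebra_simps)
    finally have "norm (G t) \<le> 2 * g" by simp
    then have "norm (G t - G s) \<le> d * (2 * g * A * g)"
      using n1 d Ag by (smt (verit) mult_left_mono mult_right_mono)
    also have "\<dots> < \<epsilon>" using d by (simp add: algebra_simps)
    finally show "dist (G t) (G s) < \<epsilon>" by (simp add: dist_norm)
  qed
qed

lemma corner_resolvent_bounded_lipschitz:
  assumes "compact K" "\<And>t. t \<in> K \<Longrightarrow> corner_inv e (e - sc t a)"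
  defines "G \<equiv> corner_resolvent e a"
  obtains M where "M > 0" "\<And>t. t \<in> K \<Longrightarrow> norm (G t) \<le> M"
    "\<And>t s. t \<in> K \<Longrightarrow> s \<in> K \<Longrightarrow> norm (G t - G s) \<le> M * norm a * M * cmod (t - s)"
proof -
  have "bounded (G ` K)"
    using continuous_on_corner_resolvent[OF assms(2)] assms(1)
    unfolding G_def by (blast intro: compact_imp_bounded compact_continuous_image)
  then obtain M where M: "M > 0" "\<And>t. t \<in> K \<Longrightarrow> norm (G t) \<le> M"
    unfolding bounded_pos by auto
  moreover have "norm (G t - G s) \<le> M * norm a * M * cmod (t - s)" if "t \<in> K" "s \<in> K" for t s
  proof -
    have "norm (G t * a * G s) \<le> norm (G t) * norm a * norm (G s)"
      by (metis norm_mult_ineq mult_right_mono norm_ge_zero order_trans)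
    also have "\<dots> \<le> M * norm a * M"
      using M(2)[OF that(1)] M(2)[OF that(2)] by (simp add: mult_mono')
    finally have "cmod (t - s) * norm (G t * a * G s) \<le> cmod (t - s) * (M * norm a * M)"
      by (rule mult_left_mono) simp
    then show ?thesis
      using corner_resolvent_diff[OF assms(2)[OF that(1)] assms(2)[OF that(2)]]
      unfolding G_def by (simp add: norm_sc mult_ac)
  qed
  ultimately show ?thesis using that by blast
qed

lemma corner_resolvent_geometric:
  assumes e: "e * e = e" "e * a = a" "a * e = a" and inv: "corner_inv e (e - sc s a)"
  shows "corner_resolvent e a s * (e - sc (s ^ N) (e * a ^ N)) = (\<Sum>m<N. sc (s ^ m) (e * a ^ m))"
proof (induct N)
  case 0
  show ?case using e by simp
next
  case (Suc N)
  define G where "G = corner_resolvent e a s"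
  have G: "G * (e - sc s a) = e" using corner_inverse(4)[OF inv] unfolding G_def corner_resolvent_def .
  have "(e - sc s a) * (e * a ^ N) = e * a ^ N - sc s (e * a ^ Suc N)"
    by (simp add: left_diff_distrib sc_mult_left mult.assoc[symmetric] e)
  then have step: "e - sc (s ^ Suc N) (e * a ^ Suc N)
      = (e - sc (s ^ N) (e * a ^ N)) + sc (s ^ N) ((e - sc s a) * (e * a ^ N))"
    by (simp add: sc_diff_right sc_sc mult.commute)
  have "G * (e - sc (s ^ Suc N) (e * a ^ Suc N))
      = G * (e - sc (s ^ N) (e * a ^ N)) + sc (s ^ N) (G * (e - sc s a) * (e * a ^ N))"
    unfolding step by (simp add: distrib_left sc_mult_right mult.assoc)
  also have "G * (e - sc s a) * (e * a ^ N) = e * a ^ N"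
    using G e by (simp add: mult.assoc[symmetric])
  finally show ?case using Suc unfolding G_def by simp
qed

definition averaged_resolvent :: "'a \<Rightarrow> 'a \<Rightarrow> nat \<Rightarrow> complex \<Rightarrow> 'a" where
  "averaged_resolvent e a N t =
     sc (1 / of_nat N) (\<Sum>k<N. corner_resolvent e a (root_unity N ^ k * t))"

text \<open>Averaging the geometric identity over the N-th roots of unity kills every term but the
  constant one.\<close>

lemma averaged_resolvent_left_inverse:
  assumes e: "e * e = e" "e * a = a" "a * e = a" and N: "N \<ge> 1"
    and inv: "\<And>k. corner_inv e (e - sc (root_unity N ^ k * t) a)"
  shows "averaged_resolvent e a N t * (e - sc (t ^ N) (a ^ N)) = e"
proof -
  define \<omega> where "\<omega> = root_unity N"
  have eaN: "e * a ^ N = a ^ N" using N e by (cases N) (simp_all add: mult.assoc[symmetric])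
  have pw: "(\<omega> ^ k * t) ^ N = t ^ N" for k
    using root_unity_power_self[OF N] unfolding \<omega>_def
    by (simp add: power_mult_distrib power_mult[symmetric] mult.commute) (simp add: power_mult)
  have "(\<Sum>k<N. corner_resolvent e a (\<omega> ^ k * t)) * (e - sc (t ^ N) (a ^ N))
      = (\<Sum>k<N. corner_resolvent e a (\<omega> ^ k * t) * (e - sc ((\<omega> ^ k * t) ^ N) (e * a ^ N)))"
    by (simp add: sum_distrib_right pw eaN)
  also have "\<dots> = (\<Sum>k<N. \<Sum>m<N. sc ((\<omega> ^ k * t) ^ m) (e * a ^ m))"
    using corner_resolvent_geometric[OF e inv] unfolding \<omega>_def by simp
  also have "\<dots> = (\<Sum>m<N. sc (t ^ m * (\<Sum>k<N. (\<omega> ^ m) ^ k)) (e * a ^ m))"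
    by (subst sum.swap) (simp add: sc_sum_left power_mult_distrib power_mult[symmetric]
        mult.commute sum_distrib_left)
  also have "\<dots> = (\<Sum>m<N. if m = 0 then sc (of_nat N) e else 0)"
    using sum_root_unity_powers[OF N] unfolding \<omega>_def by (intro sum.cong) simp_all
  also have "\<dots> = sc (of_nat N) e" using N by (simp add: sum.delta)
  finally show ?thesis
    unfolding averaged_resolvent_def \<omega>_def using N by (simp add: sc_mult_left sc_sc)
qed

lemma averaged_resolvent_corner:
  assumes "\<And>k. corner_inv e (e - sc (root_unity N ^ k * t) a)"
  shows "averaged_resolvent e a N t * e = averaged_resolvent e a N t"
  using corner_inverse(2)[OF assms]
  by (simp add: averaged_resolvent_def corner_resolvent_def sc_mult_left sum_distrib_right)

lemma averaged_resolvent_bounds: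
  assumes N: "N \<ge> 1" and ts: "t \<in> cball 0 r" "s \<in> cball 0 r"
    and bound: "\<And>t. t \<in> cball 0 r \<Longrightarrow> norm (corner_resolvent e a t) \<le> M"
    and lip: "\<And>t s. t \<in> cball 0 r \<Longrightarrow> s \<in> cball 0 r \<Longrightarrow>
      norm (corner_resolvent e a t - corner_resolvent e a s) \<le> L * cmod (t - s)"
  shows "norm (averaged_resolvent e a N t) \<le> M"
    and "norm (averaged_resolvent e a N t - averaged_resolvent e a N s) \<le> L * cmod (t - s)"
proof -
  define \<omega> where "\<omega> = root_unity N"
  have rot: "\<omega> ^ k * t \<in> cball 0 r" "\<omega> ^ k * s \<in> cball 0 r" for k
    using ts norm_root_unity_power_mult unfolding \<omega>_def by simp_all
  have "norm (\<Sum>k<N. corner_resolvent e a (\<omega> ^ k * t)) \<le> of_nat N * M"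
    using norm_sum[of "\<lambda>k. corner_resolvent e a (\<omega> ^ k * t)" "{..<N}"] bound[OF rot(1)]
      sum_bounded_above[of "{..<N}" "\<lambda>k. norm (corner_resolvent e a (\<omega> ^ k * t))" M]
    by simp
  then show "norm (averaged_resolvent e a N t) \<le> M"
    unfolding averaged_resolvent_def \<omega>_def using N by (simp add: norm_sc norm_divide field_simps)
  have "cmod (\<omega> ^ k * t - \<omega> ^ k * s) = cmod (t - s)" for k
    using norm_root_unity_power_mult[of N k "t - s"] unfolding \<omega>_def by (simp add: right_diff_distrib)
  then have term_le: "norm (corner_resolvent e a (\<omega> ^ k * t) - corner_resolvent e a (\<omega> ^ k * s))
      \<le> L * cmod (t - s)" for k
    using lip[OF rot] by metis
  have "norm (\<Sum>k<N. corner_resolvent e a (\<omega> ^ k * t) - corner_resolvent e a (\<omega> ^ k * s))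
      \<le> (\<Sum>k<N. norm (corner_resolvent e a (\<omega> ^ k * t) - corner_resolvent e a (\<omega> ^ k * s)))"
    by (rule norm_sum)
  also have "\<dots> \<le> of_nat N * (L * cmod (t - s))"
    using sum_bounded_above[of "{..<N}", OF term_le] by simp
  finally show "norm (averaged_resolvent e a N t - averaged_resolvent e a N s) \<le> L * cmod (t - s)"
    unfolding averaged_resolvent_def \<omega>_def using N
    by (simp add: sc_diff_right[symmetric] sum_subtractf norm_sc norm_divide field_simps)
qed

lemma corner_inv_one_minus_sc:
  assumes "e * e = e" "\<rho> \<ge> 0" "cmod t * \<rho> < 1"
    and inv: "\<And>\<mu>. cmod \<mu> > \<rho> \<Longrightarrow> corner_inv e (sc \<mu> e - a)"
  shows "corner_inv e (e - sc t a)"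
proof (cases "t = 0")
  case True
  then show ?thesis using assms(1) corner_inv_idem by simp
next
  case False
  then have "cmod (1/t) > \<rho>" using assms(3) by (simp add: norm_divide field_simps)
  then have "corner_inv e (sc t (sc (1/t) e - a))" using False by (intro corner_inv_sc inv)
  then show ?thesis using False by (simp add: sc_diff_right sc_sc)
qed

text \<open>The averaged resolvent is close to e at r' because r'^N a^N is small, hence also at r by
  the Lipschitz bound; being a left inverse of e - r^N a^N, it forces r^N a^N to be small.\<close>

lemma power_norm_lt_one_by_averaged_resolvent:
  assumes e: "e * e = e" "e * a = a" "a * e = a" and N: "N \<ge> 1"
    and r: "0 \<le> r'" "r' \<le> r"
    and inv: "\<And>t. t \<in> cball 0 r \<Longrightarrow> corner_inv e (e - sc t a)"
    and bound: "\<And>t. t \<in> cball 0 r \<Longrightarrow> norm (corner_resolvent e a t) \<le> M"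
    and lip: "\<And>t s. t \<in> cball 0 r \<Longrightarrow> s \<in> cball 0 r \<Longrightarrow>
      norm (corner_resolvent e a t - corner_resolvent e a s) \<le> L * cmod (t - s)"
    and small: "M * (r' ^ N * norm (a ^ N)) < 1/4" "L * (r - r') < 1/4"
  shows "r ^ N * norm (a ^ N) < 1"
proof -
  define m where "m t = averaged_resolvent e a N (complex_of_real t)" for t
  define b where "b t = sc (complex_of_real t ^ N) (a ^ N)" for t
  have disc: "complex_of_real r' \<in> cball 0 r" "complex_of_real r \<in> cball 0 r" using r by auto
  have "corner_inv e (e - sc (root_unity N ^ k * t) a)" if "t \<in> cball 0 r" for k t
    using inv that norm_root_unity_power_mult by simp
  then have left_inv: "m t * (e - b t) = e" "m t * e = m t"
    if "complex_of_real t \<in> cball 0 r" for t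
    using averaged_resolvent_left_inverse[OF e N] averaged_resolvent_corner that
    unfolding m_def b_def by blast+
  have norm_b: "norm (b t) = \<bar>t\<bar> ^ N * norm (a ^ N)" for t
    unfolding b_def by (simp add: norm_sc norm_power)
  have "m r' - e = m r' * b r'" using left_inv[OF disc(1)] by (simp add: algebra_simps)
  then have "norm (m r' - e) \<le> M * norm (b r')"
    using averaged_resolvent_bounds(1)[OF N disc(1) disc(1) bound lip] unfolding m_def
    by (metis norm_mult_ineq mult_right_mono norm_ge_zero order_trans)
  also have "\<dots> < 1/4" using small(1) r norm_b by simp
  finally have "norm (m r' - e) < 1/4" .
  moreover have "norm (m r - m r') \<le> L * (r - r')"
    using averaged_resolvent_bounds(2)[OF N disc(2) disc(1) bound lip] r unfolding m_def
    by (simp flip: of_real_diff)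
  ultimately have "norm (m r - e) < 1/2"
    using small(2) norm_triangle_ineq[of "m r - m r'" "m r' - e"] by simp
  moreover have "e * b r = b r" unfolding b_def
    using N e by (cases N) (simp_all add: sc_mult_right mult.assoc[symmetric])
  ultimately have "norm (b r) < 1"
    using norm_lt_one_if_near_left_inverse left_inv[OF disc(2)] by blast
  then show ?thesis using norm_b r by simp
qed

text \<open>If norm a exceeded \<rho>, the previous lemma would apply with 1/norm a squeezed between r' and
  r; normality enters only through norm (a ^ 2 ^ k) = norm a ^ 2 ^ k.\<close>

theorem normal_norm_le_spectral_bound:
  assumes e: "e * e = e" "e * a = a" "a * e = a" and normal: "a * st a = st a * a"
    and "\<rho> \<ge> 0" and inv: "\<And>\<mu>. cmod \<mu> > \<rho> \<Longrightarrow> corner_inv e (sc \<mu> e - a)"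
  shows "norm a \<le> \<rho>"
proof (rule ccontr)
  assume "\<not> norm a \<le> \<rho>"
  define A where "A = norm a"
  have A: "\<rho> < A" "0 < A" using \<open>\<not> norm a \<le> \<rho>\<close> \<open>\<rho> \<ge> 0\<close> unfolding A_def by auto
  obtain r1 where r1: "1/A < r1" "r1 * \<rho> < 1"
  proof (cases "\<rho> = 0")
    case True
    then show ?thesis using A by (intro that[of "2/A"]) (simp_all add: divide_strict_right_mono)
  next
    case False
    then have "1/A < 1/\<rho>" using A \<open>\<rho> \<ge> 0\<close> by (simp add: frac_less2)
    then obtain r1 where "1/A < r1" "r1 < 1/\<rho>" using dense by blast
    then show ?thesis using False \<open>\<rho> \<ge> 0\<close> by (intro that[of r1]) (simp_all add: pos_less_divide_eq)
  qed
  have disc_inv: "corner_inv e (e - sc t a)" if "t \<in> cball 0 r1" for t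
  proof -
    have "cmod t * \<rho> \<le> r1 * \<rho>" using that \<open>\<rho> \<ge> 0\<close> by (simp add: mult_right_mono)
    then have "cmod t * \<rho> < 1" using r1 by linarith
    then show ?thesis by (rule corner_inv_one_minus_sc[OF e(1) \<open>\<rho> \<ge> 0\<close> _ inv])
  qed
  obtain M where M: "M > 0" "\<And>t. t \<in> cball 0 r1 \<Longrightarrow> norm (corner_resolvent e a t) \<le> M"
    "\<And>t s. t \<in> cball 0 r1 \<Longrightarrow> s \<in> cball 0 r1 \<Longrightarrow>
      norm (corner_resolvent e a t - corner_resolvent e a s) \<le> M * A * M * cmod (t - s)"
    using corner_resolvent_bounded_lipschitz[OF compact_cball disc_inv] unfolding A_def by blast
  obtain r' r where r: "0 \<le> r'" "r' < 1/A" "1/A < r" "r \<le> r1" "M * A * M * (r - r') < 1/4"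
    using radii_around[of "1/A" r1 "M * A * M"] A M(1) r1 by auto
  then have rA: "r' * A < 1" "1 < r * A" using A by (simp_all add: field_simps)
  obtain k where "(r' * A) ^ 2 ^ k < 1 / (4 * M)"
    using power_two_power_less[of "r' * A" "1 / (4 * M)"] r(1) rA A M(1) by auto
  define N :: nat where "N = 2 ^ k"
  have "(r' * A) ^ N < 1 / (4 * M)" unfolding N_def by fact
  moreover have "norm (a ^ N) = A ^ N"
    using norm_power_two_power_normal[OF normal] unfolding N_def A_def by simp
  ultimately have small: "M * (r' ^ N * norm (a ^ N)) < 1/4"
    using M(1) by (simp add: power_mult_distrib pos_less_divide_eq mult_ac)
  have sub: "t \<in> cball 0 r1" if "t \<in> cball 0 r" for t using r(4) that by simp
  have "r ^ N * norm (a ^ N) < 1"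
  proof (rule power_norm_lt_one_by_averaged_resolvent[OF e _ r(1) _ _ _ _ small r(5)])
    show "1 \<le> N" unfolding N_def by simp
    show "r' \<le> r" using r by simp
    show "corner_inv e (e - sc t a)" if "t \<in> cball 0 r" for t using disc_inv sub that by blast
    show "norm (corner_resolvent e a t) \<le> M" if "t \<in> cball 0 r" for t using M(2) sub that by blast
    show "norm (corner_resolvent e a t - corner_resolvent e a s) \<le> M * A * M * cmod (t - s)"
      if "t \<in> cball 0 r" "s \<in> cball 0 r" for t s using M(3) sub that by blast
  qed
  then have "r ^ N * A ^ N < 1" using \<open>norm (a ^ N) = A ^ N\<close> by simp
  moreover have "1 \<le> (r * A) ^ N" using rA by (simp add: one_le_power)
  ultimately show False by (simp add: power_mult_distrib)
qed

end

section \<open>Functional calculus for a unitary of a corner\<close>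

lemma inverse_eq_cnj_on_circle: "cmod (w::complex) = 1 \<Longrightarrow> inverse w = cnj w"
  by (simp add: divide_conv_cnj inverse_eq_divide)

locale corner_unitary = unital_cstar_algebra sc st
  for sc :: "complex \<Rightarrow> 'a::{banach, real_normed_algebra_1} \<Rightarrow> 'a" and st +
  fixes e z :: 'a
  assumes st_e: "st e = e" and e_idem: "e * e = e" and e_z: "e * z = z" and z_e: "z * e = z"
    and st_z_z: "st z * z = e" and z_st_z: "z * st z = e"
begin

lemma e_st_z: "e * st z = st z" using z_e st_mult[of z e] st_e by simp
lemma st_z_e: "st z * e = st z" using e_z st_mult[of e z] st_e by simp

definition poly_corner :: "'a \<Rightarrow> complex poly \<Rightarrow> 'a" where
  "poly_corner y P = fold_coeffs (\<lambda>c acc. sc c e + y * acc) P 0"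

lemma poly_corner_0[simp]: "poly_corner y 0 = 0" by (simp add: poly_corner_def)

lemma poly_corner_pCons: "poly_corner y (pCons c P) = sc c e + y * poly_corner y P"
  by (cases "P = 0 \<and> c = 0")
     (auto simp: poly_corner_def fold_coeffs_pCons_coeff_not_0_eq fold_coeffs_pCons_not_0_0_eq)

context
  fixes y :: 'a assumes ey: "e * y = y" and ye: "y * e = y"
begin

lemma poly_corner_corner: "e * poly_corner y P = poly_corner y P" "poly_corner y P * e = poly_corner y P"
proof -
  have "e * poly_corner y P = poly_corner y P \<and> poly_corner y P * e = poly_corner y P"
  proof (induct P)
    case (pCons c P)
    then show ?case using ey ye e_idem
      by (simp add: poly_corner_pCons distrib_left distrib_right sc_mult_left sc_mult_right mult.assoc[symmetric])
         (simp add: mult.assoc)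
  qed simp
  then show "e * poly_corner y P = poly_corner y P" "poly_corner y P * e = poly_corner y P" by auto
qed

lemma poly_corner_add: "poly_corner y (P + Q) = poly_corner y P + poly_corner y Q"
proof (induct P arbitrary: Q)
  case (pCons a P)
  then show ?case by (cases Q) (simp add: poly_corner_pCons sc_add_left distrib_left algebra_simps)
qed simp

lemma poly_corner_smult: "poly_corner y (smult c P) = sc c (poly_corner y P)"
  by (induct P) (simp_all add: poly_corner_pCons sc_add_right sc_sc sc_mult_right)

lemma poly_corner_mult: "poly_corner y (P * Q) = poly_corner y P * poly_corner y Q"
proof (induct P)
  case (pCons a P)
  have "poly_corner y (pCons a P * Q) = sc a (poly_corner y Q) + y * (poly_corner y P * poly_corner y Q)"
    using pCons by (simp add: poly_corner_add poly_corner_smult poly_corner_pCons)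
  also have "\<dots> = (sc a e + y * poly_corner y P) * poly_corner y Q"
    using poly_corner_corner by (simp add: distrib_right sc_mult_left mult.assoc)
  finally show ?case by (simp add: poly_corner_pCons)
qed simp

lemma poly_corner_const: "poly_corner y [:c:] = sc c e" by (simp add: poly_corner_pCons)

lemma poly_corner_linear: "poly_corner y [:-r, 1:] = y - sc r e"
  using ye by (simp add: poly_corner_pCons sc_minus_left)

lemma poly_corner_monom: "poly_corner y (monom c k) = sc c (e * y ^ k)"
proof (induct k)
  case 0 then show ?case by (simp add: monom_0 poly_corner_const)
next
  case (Suc k)
  have "poly_corner y (monom c (Suc k)) = y * sc c (e * y ^ k)" using Suc by (simp add: monom_Suc poly_corner_pCons)
  also have "\<dots> = sc c (e * y ^ Suc k)" using ey ye by (simp add: sc_mult_right mult.assoc[symmetric])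
  finally show ?case .
qed

lemma poly_corner_commute:
  assumes "w * y = y * w" "w * e = e * w"
  shows "w * poly_corner y P = poly_corner y P * w"
proof (induct P)
  case (pCons c P)
  have "w * (y * poly_corner y P) = y * poly_corner y P * w" using pCons assms
    by (metis mult.assoc)
  then show ?case using assms
    by (simp add: poly_corner_pCons distrib_left distrib_right sc_mult_left sc_mult_right)
qed simp

end

lemma power_z_e_Suc: "z ^ Suc m * e = z ^ Suc m" "e * z ^ Suc m = z ^ Suc m"
  "st z ^ Suc m * e = st z ^ Suc m" "e * st z ^ Suc m = st z ^ Suc m"
proof -
  show "z ^ Suc m * e = z ^ Suc m" by (simp only: power_Suc2 mult.assoc z_e)
  show "e * z ^ Suc m = z ^ Suc m" by (simp only: power_Suc mult.assoc[symmetric] e_z)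
  show "st z ^ Suc m * e = st z ^ Suc m" by (simp only: power_Suc2 mult.assoc st_z_e)
  show "e * st z ^ Suc m = st z ^ Suc m" by (simp only: power_Suc mult.assoc[symmetric] e_st_z)
qed

lemma power_z_e: "z ^ m * e = e * z ^ m" "st z ^ m * e = e * st z ^ m"
  by (cases m; simp only: power_z_e_Suc power_0 mult_1_left mult_1_right)+

lemma e_power_z_corner: "e * (e * z ^ m) = e * z ^ m" "(e * z ^ m) * e = e * z ^ m"
proof -
  show "e * (e * z ^ m) = e * z ^ m" by (simp only: mult.assoc[symmetric] e_idem)
  have "(e * z ^ m) * e = e * (e * z ^ m)" by (simp only: mult.assoc power_z_e)
  then show "(e * z ^ m) * e = e * z ^ m" by (simp only: mult.assoc[symmetric] e_idem)
qed

lemma corner_inv_z: "corner_inv e z"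
  unfolding corner_inv_def using e_st_z st_z_e st_z_z z_st_z by blast

lemma corner_inv_e_power_z: "corner_inv e (e * z ^ m)"
proof (induct m)
  case 0 then show ?case unfolding corner_inv_def using e_idem by auto
next
  case (Suc m)
  have "e * z ^ Suc m = z * (e * z ^ m)" using e_z z_e by (simp add: mult.assoc[symmetric])
  moreover have "corner_inv e (z * (e * z ^ m))"
    by (rule corner_inv_mult[OF corner_inv_z Suc]) (use z_e e_power_z_corner in auto)
  ultimately show ?case by simp
qed

text \<open>laurent f x: x is a *-polynomial in z, and f is the same expression with z read as the
  variable w and z* as 1/w; on the unit circle f is the symbol of x.\<close>

inductive laurent :: "(complex \<Rightarrow> complex) \<Rightarrow> 'a \<Rightarrow> bool" where
  laurent_const: "laurent (\<lambda>_. c) (sc c e)"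
| laurent_z: "laurent (\<lambda>w. w) z"
| laurent_st_z: "laurent (\<lambda>w. inverse w) (st z)"
| laurent_add: "laurent f x \<Longrightarrow> laurent g y \<Longrightarrow> laurent (\<lambda>w. f w + g w) (x + y)"
| laurent_mult: "laurent f x \<Longrightarrow> laurent g y \<Longrightarrow> laurent (\<lambda>w. f w * g w) (x * y)"

lemma laurent_commute_z:
  assumes "laurent f x"
  shows "x * z = z * x \<and> x * st z = st z * x \<and> e * x = x \<and> x * e = x"
  using assms
proof (induct)
  case (laurent_const c)
  then show ?case using e_z z_e e_st_z st_z_e e_idem by (simp add: sc_mult_left sc_mult_right)
next
  case laurent_z then show ?case using e_z z_e st_z_z z_st_z by simp
next
  case laurent_st_z then show ?case using e_st_z st_z_e st_z_z z_st_z by simp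
next
  case (laurent_add f x g y) then show ?case by (simp add: distrib_left distrib_right)
next
  case (laurent_mult f x g y) then show ?case by (metis mult.assoc)
qed

lemma laurent_commute:
  assumes "laurent f x" "laurent g y"
  shows "x * y = y * x"
  using assms(1)
proof (induct)
  case (laurent_const c)
  have "e * y = y" "y * e = y" using laurent_commute_z[OF assms(2)] by auto
  then show ?case by (simp add: sc_mult_left sc_mult_right)
next
  case laurent_z then show ?case using laurent_commute_z[OF assms(2)] by simp
next
  case laurent_st_z then show ?case using laurent_commute_z[OF assms(2)] by simp
next
  case (laurent_add f x g y) then show ?case by (simp add: distrib_left distrib_right)
next
  case (laurent_mult f x g y) then show ?case by (metis mult.assoc)
qed

lemma laurent_star:
  assumes "laurent f x"
  shows "\<exists>g. laurent g (st x) \<and> (\<forall>w. cmod w = 1 \<longrightarrow> g w = cnj (f w))"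
  using assms
proof (induct)
  case (laurent_const c)
  have "laurent (\<lambda>_. cnj c) (st (sc c e))" using laurent.laurent_const[of "cnj c"] by (simp add: st_sc st_e)
  then show ?case by auto
next
  case laurent_z
  have "laurent (\<lambda>w. inverse w) (st z)" by (rule laurent.laurent_st_z)
  then show ?case using inverse_eq_cnj_on_circle by auto
next
  case laurent_st_z
  have "laurent (\<lambda>w. w) (st (st z))" by (simp add: st_st laurent.laurent_z)
  moreover have "cmod w = 1 \<Longrightarrow> w = cnj (inverse w)" for w using inverse_eq_cnj_on_circle[of w] by simp
  ultimately show ?case by blast
next
  case (laurent_add f x g y)
  then obtain f' g' where "laurent f' (st x)" "laurent g' (st y)" "\<forall>w. cmod w = 1 \<longrightarrow> f' w = cnj (f w)"
    "\<forall>w. cmod w = 1 \<longrightarrow> g' w = cnj (g w)" by blast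
  then show ?case by (intro exI[of _ "\<lambda>w. f' w + g' w"]) (simp add: st_add laurent.laurent_add)
next
  case (laurent_mult f x g y)
  then obtain f' g' where "laurent f' (st x)" "laurent g' (st y)" "\<forall>w. cmod w = 1 \<longrightarrow> f' w = cnj (f w)"
    "\<forall>w. cmod w = 1 \<longrightarrow> g' w = cnj (g w)" by blast
  then show ?case by (intro exI[of _ "\<lambda>w. g' w * f' w"]) (simp add: st_mult laurent.laurent_mult)
qed

lemma power_z_mult_poly_corner: "z ^ k * poly_corner z Q = poly_corner z (monom 1 k * Q)"
proof -
  have "poly_corner z (monom 1 k * Q) = e * z ^ k * poly_corner z Q"
    by (simp add: poly_corner_mult[OF e_z z_e] poly_corner_monom[OF e_z z_e])
  also have "\<dots> = z ^ k * e * poly_corner z Q" by (simp only: power_z_e)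
  also have "\<dots> = z ^ k * poly_corner z Q" by (simp only: mult.assoc poly_corner_corner[OF e_z z_e])
  finally show ?thesis by simp
qed

lemma clear_powers_shift:
  assumes "z ^ m * x = poly_corner z P" "\<forall>w. w \<noteq> 0 \<longrightarrow> f w * w ^ m = poly P w"
  shows "z ^ (k + m) * x = poly_corner z (monom 1 k * P)"
    and "\<forall>w. w \<noteq> 0 \<longrightarrow> f w * w ^ (k + m) = poly (monom 1 k * P) w"
proof -
  show "z ^ (k + m) * x = poly_corner z (monom 1 k * P)"
    using assms(1) by (simp add: power_add mult.assoc power_z_mult_poly_corner)
  show "\<forall>w. w \<noteq> 0 \<longrightarrow> f w * w ^ (k + m) = poly (monom 1 k * P) w"
    using assms(2) by (simp add: power_add poly_monom mult_ac)
qed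

lemma laurent_clear_powers:
  assumes "laurent f x"
  shows "\<exists>m P. z ^ m * x = poly_corner z P \<and> (\<forall>w. w \<noteq> 0 \<longrightarrow> f w * w ^ m = poly P w)"
  using assms
proof (induct)
  case (laurent_const c)
  show ?case by (rule exI[of _ 0], rule exI[of _ "[:c:]"]) (simp add: poly_corner_const[OF e_z z_e])
next
  case laurent_z
  show ?case by (rule exI[of _ 0], rule exI[of _ "[:0, 1:]"]) (simp add: poly_corner_pCons z_e)
next
  case laurent_st_z
  show ?case by (rule exI[of _ 1], rule exI[of _ "[:1:]"]) (simp add: poly_corner_const[OF e_z z_e] z_st_z)
next
  case (laurent_add f x g y)
  then obtain m P m' P' where h: "z ^ m * x = poly_corner z P" "\<forall>w. w \<noteq> 0 \<longrightarrow> f w * w ^ m = poly P w"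
    "z ^ m' * y = poly_corner z P'" "\<forall>w. w \<noteq> 0 \<longrightarrow> g w * w ^ m' = poly P' w" by blast
  from clear_powers_shift[OF h(1,2), of m'] clear_powers_shift[OF h(3,4), of m]
  have "z ^ (m' + m) * (x + y) = poly_corner z (monom 1 m' * P + monom 1 m * P')"
    "\<forall>w. w \<noteq> 0 \<longrightarrow> (f w + g w) * w ^ (m' + m) = poly (monom 1 m' * P + monom 1 m * P') w"
    by (simp_all add: distrib_left distrib_right poly_corner_add[OF e_z z_e] add.commute)
  then show ?case by blast
next
  case (laurent_mult f x g y)
  then obtain m P m' P' where h: "z ^ m * x = poly_corner z P" "\<forall>w. w \<noteq> 0 \<longrightarrow> f w * w ^ m = poly P w"
    "z ^ m' * y = poly_corner z P'" "\<forall>w. w \<noteq> 0 \<longrightarrow> g w * w ^ m' = poly P' w" by blast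
  have "x * z = z * x" using laurent_commute_z[OF laurent_mult(1)] by simp
  then have xz: "z ^ k * x = x * z ^ k" for k by (intro power_commuting_commutes) simp
  have "(z ^ m * x) * (z ^ m' * y) = z ^ m * (x * z ^ m') * y" by (simp only: mult.assoc)
  also have "x * z ^ m' = z ^ m' * x" by (simp only: xz)
  also have "z ^ m * (z ^ m' * x) * y = z ^ (m + m') * (x * y)" by (simp only: power_add mult.assoc)
  finally have 1: "z ^ (m + m') * (x * y) = poly_corner z (P * P')" using h by (simp add: poly_corner_mult[OF e_z z_e])
  have 2: "(f w * g w) * w ^ (m + m') = poly (P * P') w" if "w \<noteq> 0" for w
  proof -
    have "(f w * g w) * w ^ (m + m') = (f w * w ^ m) * (g w * w ^ m')"
      by (simp add: power_add algebra_simps)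
    then show ?thesis using h that by simp
  qed
  show ?case using 1 2 by blast
qed

text \<open>spec_z stands in for the spectrum of z in the corner. It is cut out so that the symbol of a
  *-polynomial is bounded by its norm on it; the converse bound is norm_laurent_le.\<close>

definition spec_z :: "complex set" where
  "spec_z = {l. cmod l = 1 \<and> (\<forall>f x. laurent f x \<longrightarrow> cmod (f l) \<le> norm x)}"

lemma norm_e: "norm e \<le> 1"
proof -
  have "norm e = norm e ^ 2" using cstar_id[of e] st_e e_idem by simp
  then have "norm e = 0 \<or> norm e = 1" by (metis power2_eq_square mult_cancel_right1 mult_eq_0_iff)
  then show ?thesis by auto
qed

lemma norm_z: "norm z \<le> 1" "norm (st z) \<le> 1"
proof -
  have "norm z ^ 2 \<le> 1" using cstar_id[of z] st_z_z norm_e by simp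
  then show 1: "norm z \<le> 1" using power2_le_imp_le[of "norm z" 1] by simp
  then show "norm (st z) \<le> 1" by simp
qed

lemma laurent_corner: "laurent f x \<Longrightarrow> e * x = x" "laurent f x \<Longrightarrow> x * e = x"
  using laurent_commute_z by auto

lemma corner_inv_z_off_circle:
  assumes "cmod r \<noteq> 1"
  shows "corner_inv e (z - sc r e)"
proof (cases "cmod r < 1")
  case True
  have n: "norm (sc r (st z)) < 1"
  proof -
    have "norm (sc r (st z)) = cmod r * norm (st z)" by (rule norm_sc)
    also have "\<dots> \<le> cmod r * 1" using norm_z(2) by (intro mult_left_mono) simp_all
    finally show ?thesis using True by simp
  qed
  have c1: "corner_inv e (e - sc r (st z))"
    by (rule corner_inv_neumann[OF e_idem _ _ n]) (simp_all add: sc_mult_left sc_mult_right e_st_z st_z_e)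
  have "corner_inv e (z * (e - sc r (st z)))"
    by (rule corner_inv_mult[OF corner_inv_z c1]) (simp_all add: z_e right_diff_distrib e_idem sc_mult_right e_st_z)
  moreover have "z * (e - sc r (st z)) = z - sc r e" by (simp add: right_diff_distrib z_e sc_mult_right z_st_z)
  ultimately show ?thesis by simp
next
  case False
  then have r1: "cmod r > 1" using assms by simp
  then have r0: "r \<noteq> 0" by auto
  have n: "norm (sc (1/r) z) < 1"
  proof -
    have "norm (sc (1/r) z) = norm z / cmod r" by (simp add: norm_sc norm_divide)
    also have "\<dots> \<le> 1 / cmod r" using norm_z(1) r1 by (simp add: divide_right_mono)
    also have "\<dots> < 1" using r1 by (simp add: divide_less_eq)
    finally show ?thesis .
  qed
  have c1: "corner_inv e (e - sc (1/r) z)"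
    by (rule corner_inv_neumann[OF e_idem _ _ n]) (simp_all add: sc_mult_left sc_mult_right e_z z_e)
  have "corner_inv e (sc (-r) (e - sc (1/r) z))" using r0 by (intro corner_inv_sc[OF c1]) simp
  moreover have "sc (-r) (e - sc (1/r) z) = z - sc r e" using r0
    by (simp add: sc_diff_right sc_sc sc_minus_left)
  ultimately show ?thesis by simp
qed

lemma poly_corner_diff: "poly_corner z (A - B) = poly_corner z A - poly_corner z B"
  using poly_corner_add[OF e_z z_e, of "A - B" B] by (simp add: eq_diff_eq)

lemma poly_corner_monom_diff:
  assumes "laurent f x" "z ^ m * x = poly_corner z P"
  shows "poly_corner z (monom \<mu> m - P) = (e * z ^ m) * (sc \<mu> e - x)"
proof -
  have "(e * z ^ m) * (sc \<mu> e - x) = sc \<mu> ((e * z ^ m) * e) - e * (z ^ m * x)"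
    by (simp add: right_diff_distrib sc_mult_right mult.assoc)
  also have "\<dots> = sc \<mu> (e * z ^ m) - poly_corner z P"
    using assms(2) e_power_z_corner poly_corner_corner[OF e_z z_e] by simp
  finally show ?thesis by (simp add: poly_corner_diff poly_corner_monom[OF e_z z_e])
qed

text \<open>As l is not in spec_z, some *-polynomial x has a symbol with cmod (f l) > norm x. Then
  f l e - x is invertible by the Neumann series, and z - l e divides z^m (f l e - x) with a
  commuting cofactor.\<close>

lemma corner_inv_z_on_circle:
  assumes l1: "cmod l = 1" and lX: "l \<notin> spec_z"
  shows "corner_inv e (z - sc l e)"
proof -
  obtain f x where fx: "laurent f x" "cmod (f l) > norm x" using lX l1 unfolding spec_z_def by force
  define \<mu> where "\<mu> = f l"
  have \<mu>0: "\<mu> \<noteq> 0" using fx unfolding \<mu>_def by (metis norm_ge_zero norm_zero not_le)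
  have n: "norm (sc (1/\<mu>) x) < 1"
  proof -
    have "norm (sc (1/\<mu>) x) = norm x / cmod \<mu>" by (simp add: norm_sc norm_divide)
    also have "\<dots> < 1" using fx \<mu>0 unfolding \<mu>_def by simp
    finally show ?thesis .
  qed
  have c1: "corner_inv e (e - sc (1/\<mu>) x)"
    by (rule corner_inv_neumann[OF e_idem _ _ n]) (simp_all add: sc_mult_left sc_mult_right laurent_corner[OF fx(1)])
  have "corner_inv e (sc \<mu> (e - sc (1/\<mu>) x))" using \<mu>0 by (intro corner_inv_sc[OF c1])
  moreover have "sc \<mu> (e - sc (1/\<mu>) x) = sc \<mu> e - x" using \<mu>0 by (simp add: sc_diff_right sc_sc)
  ultimately have c2: "corner_inv e (sc \<mu> e - x)" by simp
  obtain m P where mP: "z ^ m * x = poly_corner z P" "\<forall>w. w \<noteq> 0 \<longrightarrow> f w * w ^ m = poly P w"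
    using laurent_clear_powers[OF fx(1)] by blast
  define Q where "Q = monom \<mu> m - P"
  have l0: "l \<noteq> 0" using l1 by auto
  have "poly Q l = 0" unfolding Q_def \<mu>_def using mP(2) l0 by (simp add: poly_monom)
  then obtain R where R: "Q = [:-l, 1:] * R" using poly_eq_0_iff_dvd by (metis dvdE)
  have "poly_corner z Q = (e * z ^ m) * (sc \<mu> e - x)" unfolding Q_def by (rule poly_corner_monom_diff[OF fx(1) mP(1)])
  moreover have "corner_inv e ((e * z ^ m) * (sc \<mu> e - x))"
    by (rule corner_inv_mult[OF corner_inv_e_power_z c2])
      (simp_all add: e_power_z_corner right_diff_distrib e_idem sc_mult_right laurent_corner[OF fx(1)])
  moreover have "poly_corner z Q = (z - sc l e) * poly_corner z R"
    unfolding R by (simp only: poly_corner_mult[OF e_z z_e] poly_corner_linear[OF e_z z_e])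
  ultimately have c3: "corner_inv e ((z - sc l e) * poly_corner z R)" by simp
  show ?thesis
  proof (rule corner_inv_commuting_factor[OF c3])
    show "(z - sc l e) * poly_corner z R = poly_corner z R * (z - sc l e)"
      by (rule poly_corner_commute[OF e_z z_e])
        (simp_all add: left_diff_distrib right_diff_distrib sc_mult_left sc_mult_right e_z z_e)
  qed (simp_all add: left_diff_distrib right_diff_distrib sc_mult_left sc_mult_right e_z z_e e_idem
      poly_corner_corner[OF e_z z_e])
qed

lemma corner_inv_z_minus_notin_spec:
  assumes "l \<notin> spec_z"
  shows "corner_inv e (z - sc l e)"
  using assms corner_inv_z_off_circle corner_inv_z_on_circle by blast

lemma spec_z_empty:
  assumes "spec_z = {}"
  shows "e = 0"
proof -
  have "norm z \<le> 0"
  proof (rule normal_norm_le_spectral_bound[OF e_idem e_z z_e _ order_refl])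
    show "corner_inv e (sc \<mu> e - z)" for \<mu>
      using corner_inv_sc[OF corner_inv_z_minus_notin_spec, of \<mu> "-1"] assms
      by (simp add: sc_minus_left)
  qed (simp add: st_z_z z_st_z)
  then have "z = 0" by simp
  then show ?thesis using st_z_z by simp
qed

lemma corner_inv_poly_corner:
  assumes "Q \<noteq> 0" "\<And>r. poly Q r = 0 \<Longrightarrow> corner_inv e (z - sc r e)"
  shows "corner_inv e (poly_corner z Q)"
  using assms
proof (induct "degree Q" arbitrary: Q rule: less_induct)
  case less
  show ?case
  proof (cases "degree Q = 0")
    case True
    then obtain c where c: "Q = [:c:]" by (metis degree_eq_zeroE)
    then have "c \<noteq> 0" using less by auto
    then show ?thesis unfolding c poly_corner_const[OF e_z z_e] by (rule corner_inv_sc[OF corner_inv_idem[OF e_idem]])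
  next
    case False
    then have "\<not> constant (poly Q)" by (simp add: constant_degree)
    then obtain r where r: "poly Q r = 0" using fundamental_theorem_of_algebra by blast
    then obtain R where R: "Q = [:-r, 1:] * R" using poly_eq_0_iff_dvd by (metis dvdE)
    have R0: "R \<noteq> 0" using less R by auto
    have "degree ([:-r, 1:] * R) = degree [:-r, 1:] + degree R" by (rule degree_mult_eq) (simp_all add: R0)
    moreover have "degree [:-r, 1:] = (1::nat)" by simp
    ultimately have "degree Q = 1 + degree R" using R by (simp only:)
    then have dR: "degree R < degree Q" by simp
    have "corner_inv e (poly_corner z R)"
    proof (rule less(1)[OF dR R0])
      fix s assume "poly R s = 0"
      then have "poly Q s = 0" unfolding R by simp
      then show "corner_inv e (z - sc s e)" by (rule less(3))
    qed
    then have "corner_inv e ((z - sc r e) * poly_corner z R)"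
      by (intro corner_inv_mult[OF less(3)[OF r]])
         (simp_all add: left_diff_distrib z_e sc_mult_left e_idem poly_corner_corner[OF e_z z_e])
    moreover have "poly_corner z Q = (z - sc r e) * poly_corner z R"
      unfolding R by (simp only: poly_corner_mult[OF e_z z_e] poly_corner_linear[OF e_z z_e])
    ultimately show ?thesis by simp
  qed
qed

lemma corner_inv_notin_image_spec_z:
  assumes fx: "laurent f x" and \<mu>: "\<mu> \<notin> f ` spec_z"
  shows "corner_inv e (sc \<mu> e - x)"
proof -
  obtain m P where mP: "z ^ m * x = poly_corner z P" "\<forall>w. w \<noteq> 0 \<longrightarrow> f w * w ^ m = poly P w"
    using laurent_clear_powers[OF fx] by blast
  define Q where "Q = monom \<mu> m - P"
  have kf: "poly_corner z Q = (e * z ^ m) * (sc \<mu> e - x)" unfolding Q_def by (rule poly_corner_monom_diff[OF fx mP(1)])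
  have X0: "l \<in> spec_z \<Longrightarrow> l \<noteq> 0" for l unfolding spec_z_def by auto
  have rootX: "poly Q l = 0 \<Longrightarrow> l \<in> spec_z \<Longrightarrow> False" for l
  proof -
    assume "poly Q l = 0" "l \<in> spec_z"
    then have "\<mu> * l ^ m = f l * l ^ m" using mP(2) X0 unfolding Q_def by (simp add: poly_monom)
    then have "f l = \<mu>" using X0[OF \<open>l \<in> spec_z\<close>] by simp
    then show False using \<mu> \<open>l \<in> spec_z\<close> by auto
  qed
  have yc: "e * (sc \<mu> e - x) = sc \<mu> e - x"
    by (simp add: right_diff_distrib sc_mult_right e_idem laurent_corner[OF fx])
  show ?thesis
  proof (cases "Q = 0")
    case True
    have "spec_z = {}"
    proof (rule ccontr)
      assume "spec_z \<noteq> {}"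
      then obtain l where "l \<in> spec_z" by auto
      then show False using rootX[of l] True by simp
    qed
    then have e0: "e = 0" by (rule spec_z_empty)
    then have "x = 0" using laurent_corner(1)[OF fx] by simp
    then show ?thesis unfolding corner_inv_def using e0 by simp
  next
    case False
    have "corner_inv e (poly_corner z Q)"
    proof (rule corner_inv_poly_corner[OF False])
      fix r assume r: "poly Q r = 0"
      then show "corner_inv e (z - sc r e)" using rootX corner_inv_z_minus_notin_spec by blast
    qed
    then have "corner_inv e ((e * z ^ m) * (sc \<mu> e - x))" using kf by simp
    then show ?thesis by (rule corner_inv_cancel_left[OF corner_inv_e_power_z _ yc]) (simp_all add: e_power_z_corner)
  qed
qed

lemma laurent_normal: "laurent f x \<Longrightarrow> x * st x = st x * x"
  using laurent_star laurent_commute by blast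

lemma laurent_le_norm: "laurent f x \<Longrightarrow> l \<in> spec_z \<Longrightarrow> cmod (f l) \<le> norm x"
  unfolding spec_z_def by auto

lemma norm_laurent_le:
  assumes fx: "laurent f x" and c: "c \<ge> 0" and b: "\<And>l. l \<in> spec_z \<Longrightarrow> cmod (f l) \<le> c"
  shows "norm x \<le> c"
proof (rule normal_norm_le_spectral_bound[OF e_idem laurent_corner[OF fx] laurent_normal[OF fx] c])
  fix \<mu> assume "c < cmod \<mu>"
  then have "\<mu> \<notin> f ` spec_z" using b by force
  then show "corner_inv e (sc \<mu> e - x)" by (rule corner_inv_notin_image_spec_z[OF fx])
qed

lemma continuous_on_laurent: "laurent f x \<Longrightarrow> continuous_on (- {0}) f"
  by (induct rule: laurent.induct) (auto intro!: continuous_intros)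

lemma spec_z_norm: "l \<in> spec_z \<Longrightarrow> cmod l = 1" unfolding spec_z_def by simp

lemma spec_z_subset_sphere: "spec_z \<subseteq> sphere 0 1" unfolding spec_z_def by auto

lemma compact_spec_z: "compact spec_z"
proof -
  have eq: "spec_z = sphere 0 1 \<inter> (\<Inter>p\<in>{p. laurent (fst p) (snd p)}. sphere 0 1 \<inter> (\<lambda>l. cmod (fst p l)) -` atMost (norm (snd p)))"
    unfolding spec_z_def by auto
  have "closed (sphere (0::complex) 1 \<inter> (\<lambda>l. cmod (fst p l)) -` atMost (norm (snd p)))"
    if "laurent (fst p) (snd p)" for p
  proof (rule continuous_closed_preimage)
    have "continuous_on (sphere 0 1) (fst p)"
      by (rule continuous_on_subset[OF continuous_on_laurent[OF that]]) auto
    then show "continuous_on (sphere 0 1) (\<lambda>l. cmod (fst p l))" by (intro continuous_intros)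
  qed auto
  then have "closed spec_z" unfolding eq by (intro closed_Int closed_INT) auto
  moreover have "bounded spec_z" using spec_z_subset_sphere bounded_subset[OF bounded_sphere] by blast
  ultimately show ?thesis by (simp add: compact_eq_bounded_closed)
qed

lemma laurent_diff: "laurent f x \<Longrightarrow> laurent g y \<Longrightarrow> laurent (\<lambda>w. f w - g w) (x - y)"
proof -
  assume a: "laurent f x" "laurent g y"
  have "laurent (\<lambda>w. f w + (\<lambda>_. -1) w * g w) (x + sc (-1) e * y)"
    by (rule laurent.laurent_add[OF a(1) laurent.laurent_mult[OF laurent.laurent_const a(2)]])
  moreover have "sc (-1) e * y = - y" using laurent_corner[OF a(2)] by (simp add: sc_mult_left sc_minus_left)
  ultimately show ?thesis by simp
qed

lemma laurent_scale: "laurent f x \<Longrightarrow> laurent (\<lambda>w. c * f w) (sc c x)"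
proof -
  assume a: "laurent f x"
  have "laurent (\<lambda>w. (\<lambda>_. c) w * f w) (sc c e * x)" by (rule laurent.laurent_mult[OF laurent.laurent_const a])
  then show ?thesis using laurent_corner[OF a] by (simp add: sc_mult_left)
qed

lemma laurent_dist_le:
  "laurent f x \<Longrightarrow> laurent g y \<Longrightarrow> l \<in> spec_z \<Longrightarrow> cmod (f l - g l) \<le> norm (x - y)"
proof -
  assume a: "laurent f x" "laurent g y" "l \<in> spec_z"
  from laurent_le_norm[OF laurent_diff[OF a(1,2)] a(3)] show ?thesis by simp
qed

definition Cstar_z :: "'a set" where "Cstar_z = closure {x. \<exists>f. laurent f x}"

lemma laurent_in_Cstar_z: assumes "laurent f x" shows "x \<in> Cstar_z"
  unfolding Cstar_z_def by (rule closure_subset[THEN subsetD]) (use assms in blast)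

lemma Cstar_zE:
  assumes "x \<in> Cstar_z"
  obtains F xs where "\<And>k. laurent (F k) (xs k)" "xs \<longlonglongrightarrow> x"
proof -
  obtain s where s: "\<And>n. s n \<in> {x. \<exists>f. laurent f x}" "s \<longlonglongrightarrow> x"
    using assms unfolding Cstar_z_def closure_sequential by blast
  then have "\<forall>n. \<exists>f. laurent f (s n)" by simp
  from choice[OF this] obtain F where "\<forall>n. laurent (F n) (s n)" by (erule exE)
  then show ?thesis by (intro that[of F s] s(2)) simp
qed

lemma Cstar_zI:
  assumes "\<And>k. laurent (F k) (xs k)" "xs \<longlonglongrightarrow> x"
  shows "x \<in> Cstar_z"
proof -
  have "xs n \<in> {x. \<exists>f. laurent f x}" for n
  proof (rule CollectI)
    show "\<exists>f. laurent f (xs n)" using assms(1)[of n] by (rule exI[of _ "F n"])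
  qed
  then show ?thesis unfolding Cstar_z_def closure_sequential using assms(2) by (intro exI[of _ xs] conjI allI)
qed

text \<open>The value at l of the function represented by x, read off any sequence of *-polynomials
  converging to x; by laurent_dist_le the choice does not matter.\<close>

definition gelfand :: "complex \<Rightarrow> 'a \<Rightarrow> complex" where
  "gelfand l x = lim (\<lambda>k. fst (SOME p. (\<forall>k. laurent (fst p k) (snd p k)) \<and> snd p \<longlonglongrightarrow> x) k l)"

lemma Cauchy_laurent_values:
  assumes "\<And>k. laurent (F k) (xs k)" "Cauchy xs" "l \<in> spec_z"
  shows "Cauchy (\<lambda>k. F k l)"
proof (rule metric_CauchyI)
  fix \<epsilon> :: real assume "\<epsilon> > 0"
  then obtain M where M: "\<And>m n. m \<ge> M \<Longrightarrow> n \<ge> M \<Longrightarrow> dist (xs m) (xs n) < \<epsilon>"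
    using assms(2) metric_CauchyD by blast
  show "\<exists>M. \<forall>m\<ge>M. \<forall>n\<ge>M. dist (F m l) (F n l) < \<epsilon>"
  proof (intro exI allI impI)
    fix m n assume "m \<ge> M" "n \<ge> M"
    then have "dist (xs m) (xs n) < \<epsilon>" by (rule M)
    moreover have "cmod (F m l - F n l) \<le> norm (xs m - xs n)" by (rule laurent_dist_le[OF assms(1) assms(1) assms(3)])
    ultimately show "dist (F m l) (F n l) < \<epsilon>" by (simp add: dist_norm)
  qed
qed

lemma gelfand_limit:
  assumes F: "\<And>k. laurent (F k) (xs k)" "xs \<longlonglongrightarrow> x" and l: "l \<in> spec_z"
  shows "(\<lambda>k. F k l) \<longlonglongrightarrow> gelfand l x"
proof -
  define p where "p = (SOME p. (\<forall>k. laurent (fst p k) (snd p k)) \<and> snd p \<longlonglongrightarrow> x)"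
  have "\<exists>p. (\<forall>k. laurent (fst p k) (snd p k)) \<and> snd p \<longlonglongrightarrow> x"
    by (rule exI[of _ "(F, xs)"]) (simp add: F)
  then have pp: "(\<forall>k. laurent (fst p k) (snd p k)) \<and> snd p \<longlonglongrightarrow> x"
    unfolding p_def by (rule someI_ex)
  then have p: "\<And>k. laurent (fst p k) (snd p k)" "snd p \<longlonglongrightarrow> x" by simp_all
  have "Cauchy (\<lambda>k. fst p k l)"
    by (rule Cauchy_laurent_values[OF p(1) _ l]) (rule LIMSEQ_imp_Cauchy[OF p(2)])
  then have conv: "(\<lambda>k. fst p k l) \<longlonglongrightarrow> gelfand l x"
    unfolding gelfand_def p_def[symmetric] using Cauchy_convergent by (simp add: convergent_LIMSEQ_iff)
  have "(\<lambda>k. xs k - snd p k) \<longlonglongrightarrow> x - x" by (intro tendsto_diff F p)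
  then have nz: "(\<lambda>k. norm (xs k - snd p k)) \<longlonglongrightarrow> 0" by (simp add: tendsto_norm_zero)
  have "(\<lambda>k. F k l - fst p k l) \<longlonglongrightarrow> 0"
  proof (rule Lim_null_comparison[OF _ nz])
    show "\<forall>\<^sub>F k in sequentially. norm (F k l - fst p k l) \<le> norm (xs k - snd p k)"
      using laurent_dist_le[OF F(1) p(1) l] by simp
  qed
  from tendsto_add[OF this conv] show ?thesis by simp
qed

lemma gelfand_laurent: assumes "laurent f x" "l \<in> spec_z" shows "gelfand l x = f l"
proof -
  have "(\<lambda>k. f l) \<longlonglongrightarrow> gelfand l x" by (rule gelfand_limit[of "\<lambda>_. f" "\<lambda>_. x" x l]) (simp_all add: assms)
  then show ?thesis by (simp add: LIMSEQ_const_iff)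
qed

lemma gelfand_dist_le:
  assumes "laurent f y" "x \<in> Cstar_z" "l \<in> spec_z"
  shows "cmod (f l - gelfand l x) \<le> norm (y - x)"
proof -
  obtain F xs where F: "\<And>k. laurent (F k) (xs k)" "xs \<longlonglongrightarrow> x" using Cstar_zE[OF assms(2)] by blast
  have "(\<lambda>k. cmod (f l - F k l)) \<longlonglongrightarrow> cmod (f l - gelfand l x)"
    by (intro tendsto_intros gelfand_limit[OF F assms(3)])
  moreover have "(\<lambda>k. norm (y - xs k)) \<longlonglongrightarrow> norm (y - x)" by (intro tendsto_intros F)
  moreover have "\<And>k. cmod (f l - F k l) \<le> norm (y - xs k)" by (rule laurent_dist_le[OF assms(1) F(1) assms(3)])
  ultimately show ?thesis by (intro LIMSEQ_le) auto
qed

lemma Cstar_z_add: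
  assumes "x \<in> Cstar_z" "y \<in> Cstar_z"
  shows "x + y \<in> Cstar_z \<and> (\<forall>l\<in>spec_z. gelfand l (x + y) = gelfand l x + gelfand l y)"
proof -
  obtain F xs where F: "\<And>k. laurent (F k) (xs k)" "xs \<longlonglongrightarrow> x" using Cstar_zE[OF assms(1)] by blast
  obtain G ys where G: "\<And>k. laurent (G k) (ys k)" "ys \<longlonglongrightarrow> y" using Cstar_zE[OF assms(2)] by blast
  have H: "\<And>k. laurent (\<lambda>w. F k w + G k w) (xs k + ys k)" by (rule laurent.laurent_add[OF F(1) G(1)])
  have L: "(\<lambda>k. xs k + ys k) \<longlonglongrightarrow> x + y" by (rule tendsto_add[OF F(2) G(2)])
  show ?thesis
  proof (intro conjI ballI)
    show "x + y \<in> Cstar_z" by (rule Cstar_zI[OF H L])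
    fix l assume l: "l \<in> spec_z"
    have "(\<lambda>k. F k l + G k l) \<longlonglongrightarrow> gelfand l (x + y)" using gelfand_limit[OF H L l] by simp
    moreover have "(\<lambda>k. F k l + G k l) \<longlonglongrightarrow> gelfand l x + gelfand l y"
      by (rule tendsto_add[OF gelfand_limit[OF F l] gelfand_limit[OF G l]])
    ultimately show "gelfand l (x + y) = gelfand l x + gelfand l y" by (rule LIMSEQ_unique)
  qed
qed

lemma Cstar_z_mult:
  assumes "x \<in> Cstar_z" "y \<in> Cstar_z"
  shows "x * y \<in> Cstar_z \<and> (\<forall>l\<in>spec_z. gelfand l (x * y) = gelfand l x * gelfand l y)"
proof -
  obtain F xs where F: "\<And>k. laurent (F k) (xs k)" "xs \<longlonglongrightarrow> x" using Cstar_zE[OF assms(1)] by blast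
  obtain G ys where G: "\<And>k. laurent (G k) (ys k)" "ys \<longlonglongrightarrow> y" using Cstar_zE[OF assms(2)] by blast
  have H: "\<And>k. laurent (\<lambda>w. F k w * G k w) (xs k * ys k)" by (rule laurent.laurent_mult[OF F(1) G(1)])
  have L: "(\<lambda>k. xs k * ys k) \<longlonglongrightarrow> x * y" by (rule tendsto_mult[OF F(2) G(2)])
  show ?thesis
  proof (intro conjI ballI)
    show "x * y \<in> Cstar_z" by (rule Cstar_zI[OF H L])
    fix l assume l: "l \<in> spec_z"
    have "(\<lambda>k. F k l * G k l) \<longlonglongrightarrow> gelfand l (x * y)" using gelfand_limit[OF H L l] by simp
    moreover have "(\<lambda>k. F k l * G k l) \<longlonglongrightarrow> gelfand l x * gelfand l y"
      by (rule tendsto_mult[OF gelfand_limit[OF F l] gelfand_limit[OF G l]])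
    ultimately show "gelfand l (x * y) = gelfand l x * gelfand l y" by (rule LIMSEQ_unique)
  qed
qed

lemma Cstar_z_sc:
  assumes "x \<in> Cstar_z"
  shows "sc c x \<in> Cstar_z \<and> (\<forall>l\<in>spec_z. gelfand l (sc c x) = c * gelfand l x)"
proof -
  obtain F xs where F: "\<And>k. laurent (F k) (xs k)" "xs \<longlonglongrightarrow> x" using Cstar_zE[OF assms(1)] by blast
  have H: "\<And>k. laurent (\<lambda>w. c * F k w) (sc c (xs k))" by (rule laurent_scale[OF F(1)])
  have L: "(\<lambda>k. sc c (xs k)) \<longlonglongrightarrow> sc c x" by (rule bounded_linear.tendsto[OF bounded_linear_sc F(2)])
  show ?thesis
  proof (intro conjI ballI)
    show "sc c x \<in> Cstar_z" by (rule Cstar_zI[OF H L])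
    fix l assume l: "l \<in> spec_z"
    have "(\<lambda>k. c * F k l) \<longlonglongrightarrow> gelfand l (sc c x)" using gelfand_limit[OF H L l] by simp
    moreover have "(\<lambda>k. c * F k l) \<longlonglongrightarrow> c * gelfand l x"
      by (rule tendsto_mult[OF tendsto_const gelfand_limit[OF F l]])
    ultimately show "gelfand l (sc c x) = c * gelfand l x" by (rule LIMSEQ_unique)
  qed
qed

lemma Cstar_z_st:
  assumes "x \<in> Cstar_z"
  shows "st x \<in> Cstar_z \<and> (\<forall>l\<in>spec_z. gelfand l (st x) = cnj (gelfand l x))"
proof -
  obtain F xs where F: "\<And>k. laurent (F k) (xs k)" "xs \<longlonglongrightarrow> x" using Cstar_zE[OF assms(1)] by blast
  have "\<forall>k. \<exists>g. laurent g (st (xs k)) \<and> (\<forall>w. cmod w = 1 \<longrightarrow> g w = cnj (F k w))"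
    using laurent_star[OF F(1)] by simp
  from choice[OF this] obtain G where G: "\<forall>k. laurent (G k) (st (xs k)) \<and> (\<forall>w. cmod w = 1 \<longrightarrow> G k w = cnj (F k w))"
    by (erule exE)
  have H: "\<And>k. laurent (G k) (st (xs k))" using G by simp
  have L: "(\<lambda>k. st (xs k)) \<longlonglongrightarrow> st x" by (rule bounded_linear.tendsto[OF bounded_linear_st F(2)])
  show ?thesis
  proof (intro conjI ballI)
    show "st x \<in> Cstar_z" by (rule Cstar_zI[OF H L])
    fix l assume l: "l \<in> spec_z"
    have "(\<lambda>k. G k l) \<longlonglongrightarrow> gelfand l (st x)" by (rule gelfand_limit[OF H L l])
    moreover have "(\<lambda>k. G k l) = (\<lambda>k. cnj (F k l))" using G spec_z_norm[OF l] by simp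
    moreover have "(\<lambda>k. cnj (F k l)) \<longlonglongrightarrow> cnj (gelfand l x)"
      by (rule tendsto_cnj[OF gelfand_limit[OF F l]])
    ultimately show "gelfand l (st x) = cnj (gelfand l x)" using LIMSEQ_unique by metis
  qed
qed

lemma closed_Cstar_z: "closed Cstar_z" unfolding Cstar_z_def by simp

lemma Cstar_z_corner:
  assumes "x \<in> Cstar_z"
  shows "e * x = x" "x * e = x"
proof -
  obtain F xs where F: "\<And>k. laurent (F k) (xs k)" "xs \<longlonglongrightarrow> x" using Cstar_zE[OF assms(1)] by blast
  have "(\<lambda>k. e * xs k) \<longlonglongrightarrow> e * x" by (rule tendsto_mult[OF tendsto_const F(2)])
  moreover have "(\<lambda>k. e * xs k) = xs" using laurent_corner(1)[OF F(1)] by simp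
  ultimately show "e * x = x" using F(2) LIMSEQ_unique by metis
  have "(\<lambda>k. xs k * e) \<longlonglongrightarrow> x * e" by (rule tendsto_mult[OF F(2) tendsto_const])
  moreover have "(\<lambda>k. xs k * e) = xs" using laurent_corner(2)[OF F(1)] by simp
  ultimately show "x * e = x" using F(2) LIMSEQ_unique by metis
qed

lemma e_in_Cstar_z: "e \<in> Cstar_z" using laurent_in_Cstar_z[OF laurent_const[of 1]] by simp
lemma z_in_Cstar_z: "z \<in> Cstar_z" by (rule laurent_in_Cstar_z[OF laurent_z])
lemma zero_in_Cstar_z: "0 \<in> Cstar_z" using laurent_in_Cstar_z[OF laurent_const[of 0]] by simp

lemma Cstar_z_sum:
  assumes "finite K" "\<And>k. k \<in> K \<Longrightarrow> f k \<in> Cstar_z"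
  shows "sum f K \<in> Cstar_z \<and> (\<forall>l\<in>spec_z. gelfand l (sum f K) = (\<Sum>k\<in>K. gelfand l (f k)))"
  using assms
proof (induct K rule: finite_induct)
  case empty
  have "gelfand l 0 = 0" if "l \<in> spec_z" for l using gelfand_laurent[OF laurent_const[of 0] that] by simp
  then show ?case using zero_in_Cstar_z by simp
next
  case (insert k K)
  then have a: "f k \<in> Cstar_z" "sum f K \<in> Cstar_z" "\<forall>l\<in>spec_z. gelfand l (sum f K) = (\<Sum>k\<in>K. gelfand l (f k))" by auto
  show ?case using Cstar_z_add[OF a(1,2)] a(3) insert(1,2) by simp
qed

lemma continuous_on_gelfand:
  assumes "x \<in> Cstar_z"
  shows "continuous_on spec_z (\<lambda>l. gelfand l x)"
proof -
  obtain F xs where F: "\<And>k. laurent (F k) (xs k)" "xs \<longlonglongrightarrow> x" using Cstar_zE[OF assms(1)] by blast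
  have X0: "spec_z \<subseteq> - {0}" using spec_z_norm by force
  have "uniform_limit spec_z F (\<lambda>l. gelfand l x) sequentially"
  proof (rule uniform_limitI)
    fix \<epsilon> :: real assume "\<epsilon> > 0"
    then have "\<forall>\<^sub>F k in sequentially. dist (xs k) x < \<epsilon>" using F(2) tendsto_iff by blast
    then show "\<forall>\<^sub>F k in sequentially. \<forall>l\<in>spec_z. dist (F k l) (gelfand l x) < \<epsilon>"
    proof (rule eventually_mono)
      fix k assume k: "dist (xs k) x < \<epsilon>"
      show "\<forall>l\<in>spec_z. dist (F k l) (gelfand l x) < \<epsilon>"
      proof
        fix l assume "l \<in> spec_z"
        then have "cmod (F k l - gelfand l x) \<le> norm (xs k - x)" by (rule gelfand_dist_le[OF F(1) assms])
        then show "dist (F k l) (gelfand l x) < \<epsilon>" using k by (simp add: dist_norm)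
      qed
    qed
  qed
  moreover have "\<forall>\<^sub>F k in sequentially. continuous_on spec_z (F k)"
    using continuous_on_subset[OF continuous_on_laurent[OF F(1)] X0] by simp
  ultimately show ?thesis using uniform_limit_theorem by (metis trivial_limit_sequentially)
qed

lemma gelfand_zero_imp_zero:
  assumes "x \<in> Cstar_z" "\<And>l. l \<in> spec_z \<Longrightarrow> gelfand l x = 0"
  shows "x = 0"
proof -
  obtain F xs where F: "\<And>k. laurent (F k) (xs k)" "xs \<longlonglongrightarrow> x" using Cstar_zE[OF assms(1)] by blast
  have b: "norm (xs k) \<le> norm (xs k - x)" for k
  proof (rule norm_laurent_le[OF F(1)])
    fix l assume l: "l \<in> spec_z"
    show "cmod (F k l) \<le> norm (xs k - x)" using gelfand_dist_le[OF F(1) assms(1) l] assms(2)[OF l] by simp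
  qed simp
  have "(\<lambda>k. xs k - x) \<longlonglongrightarrow> x - x" by (intro tendsto_diff F tendsto_const)
  then have "(\<lambda>k. norm (xs k - x)) \<longlonglongrightarrow> 0" by (simp add: tendsto_norm_zero)
  then have "xs \<longlonglongrightarrow> 0" by (rule Lim_null_comparison[rotated]) (simp add: b)
  then show ?thesis using F(2) LIMSEQ_unique by metis
qed

lemma real_polynomial_function_laurent:
  fixes h :: "complex \<Rightarrow> real"
  assumes "real_polynomial_function h"
  shows "\<exists>g y. laurent g y \<and> (\<forall>w. cmod w = 1 \<longrightarrow> g w = complex_of_real (h w))"
  using assms
proof (induct rule: real_polynomial_function.induct)
  case (linear h)
  define a where "a = (complex_of_real (h 1) - \<i> * complex_of_real (h \<i>)) / 2"
  define b where "b = (complex_of_real (h 1) + \<i> * complex_of_real (h \<i>)) / 2"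
  have p: "laurent (\<lambda>w. a * w + b * inverse w) (sc a e * z + sc b e * st z)"
    by (rule laurent.laurent_add[OF laurent.laurent_mult[OF laurent_const laurent_z] laurent.laurent_mult[OF laurent_const laurent_st_z]])
  have "a * w + b * inverse w = complex_of_real (h w)" if "cmod w = 1" for w
  proof -
    have lin: "linear h" using linear by (rule bounded_linear.linear)
    have "w = Re w *\<^sub>R 1 + Im w *\<^sub>R \<i>" by (simp add: complex_eq_iff)
    then have "h w = h (Re w *\<^sub>R 1 + Im w *\<^sub>R \<i>)" by simp
    also have "\<dots> = Re w * h 1 + Im w * h \<i>" using lin by (simp add: linear_add linear_cmul)
    finally have hw: "h w = Re w * h 1 + Im w * h \<i>" .
    show ?thesis using inverse_eq_cnj_on_circle[OF that] unfolding hw a_def b_def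
      by (simp add: complex_eq_iff algebra_simps) (simp add: add_divide_distrib[symmetric])
  qed
  then show ?case by (intro exI[of _ "\<lambda>w. a * w + b * inverse w"] exI[of _ "sc a e * z + sc b e * st z"] conjI p) simp
next
  case (const c)
  show ?case by (intro exI[of _ "\<lambda>_. complex_of_real c"] exI[of _ "sc (complex_of_real c) e"] conjI laurent_const) simp
next
  case (add f g)
  then obtain f' x g' y where "laurent f' x" "\<forall>w. cmod w = 1 \<longrightarrow> f' w = complex_of_real (f w)"
    "laurent g' y" "\<forall>w. cmod w = 1 \<longrightarrow> g' w = complex_of_real (g w)" by blast
  then show ?case by (intro exI[of _ "\<lambda>w. f' w + g' w"] exI[of _ "x + y"]) (simp add: laurent.laurent_add)
next
  case (mult f g)
  then obtain f' x g' y where "laurent f' x" "\<forall>w. cmod w = 1 \<longrightarrow> f' w = complex_of_real (f w)"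
    "laurent g' y" "\<forall>w. cmod w = 1 \<longrightarrow> g' w = complex_of_real (g w)" by blast
  then show ?case by (intro exI[of _ "\<lambda>w. f' w * g' w"] exI[of _ "x * y"]) (simp add: laurent.laurent_mult)
qed

lemma polynomial_function_laurent:
  fixes g :: "complex \<Rightarrow> complex"
  assumes "polynomial_function g"
  shows "\<exists>g' y. laurent g' y \<and> (\<forall>w. cmod w = 1 \<longrightarrow> g' w = g w)"
proof -
  have r1: "real_polynomial_function (Re \<circ> g)" and r2: "real_polynomial_function (Im \<circ> g)"
    using assms unfolding polynomial_function_def by (simp_all add: bounded_linear_Re bounded_linear_Im)
  obtain g1 y1 where a1: "laurent g1 y1" and a2: "\<forall>w. cmod w = 1 \<longrightarrow> g1 w = complex_of_real ((Re \<circ> g) w)"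
    using real_polynomial_function_laurent[OF r1] by (elim exE conjE)
  obtain g2 y2 where a3: "laurent g2 y2" and a4: "\<forall>w. cmod w = 1 \<longrightarrow> g2 w = complex_of_real ((Im \<circ> g) w)"
    using real_polynomial_function_laurent[OF r2] by (elim exE conjE)
  have "laurent (\<lambda>w. g1 w + \<i> * g2 w) (y1 + sc \<i> y2)" by (rule laurent.laurent_add[OF a1 laurent_scale[OF a3]])
  moreover have "\<forall>w. cmod w = 1 \<longrightarrow> g1 w + \<i> * g2 w = g w"
    using a2 a4 by (simp add: complex_eq_iff)
  ultimately show ?thesis by (intro exI[of _ "\<lambda>w. g1 w + \<i> * g2 w"] exI[of _ "y1 + sc \<i> y2"] conjI)
qed

lemma laurent_approx:
  assumes "continuous_on spec_z f"
  obtains G ys where "\<And>k. laurent (G k) (ys k)"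
    "\<And>k l. l \<in> spec_z \<Longrightarrow> cmod (f l - G k l) < inverse (real (Suc k))"
proof -
  have "\<exists>gy. laurent (fst gy) (snd gy) \<and> (\<forall>l\<in>spec_z. cmod (f l - fst gy l) < inverse (real (Suc k)))"
    for k
  proof -
    have "0 < inverse (real (Suc k))" by simp
    then obtain q where q: "polynomial_function q" "\<forall>l\<in>spec_z. norm (f l - q l) < inverse (real (Suc k))"
      using Stone_Weierstrass_polynomial_function[OF compact_spec_z assms] by blast
    obtain g y where "laurent g y" "\<forall>w. cmod w = 1 \<longrightarrow> g w = q w"
      using polynomial_function_laurent[OF q(1)] by blast
    then show ?thesis using q(2) spec_z_norm by (intro exI[of _ "(g, y)"]) simp
  qed
  then obtain gy where "\<And>k. laurent (fst (gy k)) (snd (gy k))"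
    "\<And>k. \<forall>l\<in>spec_z. cmod (f l - fst (gy k) l) < inverse (real (Suc k))"
    using choice[of "\<lambda>k gy. laurent (fst gy) (snd gy) \<and>
      (\<forall>l\<in>spec_z. cmod (f l - fst gy l) < inverse (real (Suc k)))"] by blast
  then show ?thesis using that[of "\<lambda>k. fst (gy k)" "\<lambda>k. snd (gy k)"] by blast
qed

lemma Cauchy_laurent_approx:
  assumes "\<And>k. laurent (G k) (ys k)"
    and "\<And>k l. l \<in> spec_z \<Longrightarrow> cmod (f l - G k l) < inverse (real (Suc k))"
  shows "Cauchy ys"
proof (rule metric_CauchyI)
  fix \<epsilon> :: real assume \<epsilon>: "\<epsilon> > 0"
  have dist_ys: "norm (ys m - ys k) \<le> inverse (real (Suc m)) + inverse (real (Suc k))" for m k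
  proof (rule norm_laurent_le[OF laurent_diff[OF assms(1) assms(1)]])
    fix l assume l: "l \<in> spec_z"
    have "G m l - G k l = (f l - G k l) - (f l - G m l)" by simp
    then have "cmod (G m l - G k l) \<le> cmod (f l - G m l) + cmod (f l - G k l)"
      using norm_triangle_ineq4[of "f l - G k l" "f l - G m l"] by simp
    then show "cmod (G m l - G k l) \<le> inverse (real (Suc m)) + inverse (real (Suc k))"
      using assms(2)[OF l, of m] assms(2)[OF l, of k] by simp
  qed simp
  obtain M :: nat where M: "2 / \<epsilon> < real M" using reals_Archimedean2 by blast
  have small: "inverse (real (Suc k)) < \<epsilon> / 2" if "k \<ge> M" for k
  proof -
    have "2 / \<epsilon> < real (Suc k)" using M that by simp
    then show ?thesis using \<epsilon> by (simp add: inverse_eq_divide field_simps)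
  qed
  show "\<exists>M. \<forall>m\<ge>M. \<forall>k\<ge>M. dist (ys m) (ys k) < \<epsilon>"
  proof (intro exI allI impI)
    fix m k assume "m \<ge> M" "k \<ge> M"
    then have "inverse (real (Suc m)) + inverse (real (Suc k)) < \<epsilon>" using small[of m] small[of k] by linarith
    then show "dist (ys m) (ys k) < \<epsilon>" using dist_ys[of m k] by (simp add: dist_norm)
  qed
qed

lemma gelfand_surj:
  assumes f: "continuous_on spec_z f"
  shows "\<exists>x\<in>Cstar_z. \<forall>l\<in>spec_z. gelfand l x = f l"
proof -
  obtain G ys where G: "\<And>k. laurent (G k) (ys k)"
    "\<And>k l. l \<in> spec_z \<Longrightarrow> cmod (f l - G k l) < inverse (real (Suc k))"
    using laurent_approx[OF f] by blast
  obtain x where x: "ys \<longlonglongrightarrow> x"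
    using Cauchy_laurent_approx[OF G] Cauchy_convergent convergent_def by blast
  have "gelfand l x = f l" if l: "l \<in> spec_z" for l
  proof -
    have "(\<lambda>k. G k l - f l) \<longlonglongrightarrow> 0"
      by (rule Lim_null_comparison[OF _ LIMSEQ_inverse_real_of_nat])
        (use G(2)[OF l] in \<open>simp add: norm_minus_commute less_imp_le\<close>)
    then have "(\<lambda>k. G k l) \<longlonglongrightarrow> f l" by (simp add: LIM_zero_iff)
    then show ?thesis using gelfand_limit[OF G(1) x l] LIMSEQ_unique by blast
  qed
  then show ?thesis using Cstar_zI[OF G(1) x] by blast
qed

lemma Cstar_z_minimal:
  assumes "closed B" "star_subalgebra sc st B" "e \<in> B" "z \<in> B"
  shows "Cstar_z \<subseteq> B"
proof -
  have sB: "\<forall>c. \<forall>x\<in>B. sc c x \<in> B" "\<forall>x\<in>B. \<forall>y\<in>B. x + y \<in> B \<and> x * y \<in> B" "\<forall>x\<in>B. st x \<in> B"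
    using assms(2) unfolding star_subalgebra_def by auto
  have "laurent f x \<Longrightarrow> x \<in> B" for f x
    by (induct rule: laurent.induct) (use sB assms(3,4) in auto)
  then have "{x. \<exists>f. laurent f x} \<subseteq> B" by auto
  then show ?thesis unfolding Cstar_z_def by (rule closure_minimal[OF _ assms(1)])
qed
end

section \<open>Matrix units\<close>

lemma star_subalgebra_sum:
  assumes "star_subalgebra sc st B" "finite K" "\<And>k. k \<in> K \<Longrightarrow> f k \<in> B"
  shows "sum f K \<in> B"
  using assms(2,3)
proof (induct K rule: finite_induct)
  case empty then show ?case using assms(1) unfolding star_subalgebra_def by simp
next
  case (insert k K) then show ?case using assms(1) unfolding star_subalgebra_def by simp
qed

locale cyclic_projections = unital_cstar_algebra sc st
  for sc :: "complex \<Rightarrow> 'a::{banach, real_normed_algebra_1} \<Rightarrow> 'a" and st +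
  fixes e :: "nat \<Rightarrow> 'a" and u :: 'a and n :: nat
  assumes n_pos: "n \<ge> 1"
    and projection_e: "\<And>i. i \<in> {1..n} \<Longrightarrow> projection st (e i)"
    and e_orthogonal: "\<And>i j. i \<in> {1..n} \<Longrightarrow> j \<in> {1..n} \<Longrightarrow> i \<noteq> j \<Longrightarrow> e i * e j = 0"
    and unitary_u: "unitary st u"
    and u_rotates_e: "\<And>i. i \<in> {1..n} \<Longrightarrow> st u * e i * u = e (if i = n then 1 else i + 1)"
begin

definition E :: "nat \<Rightarrow> 'a" where "E i = e (i mod n + 1)"

lemma E_index: "i mod n + 1 \<in> {1..n}" using n_pos by (simp add: Suc_leI)

lemma st_E: "st (E i) = E i" and E_idem: "E i * E i = E i"
  using projection_e[OF E_index[of i]] unfolding E_def projection_def by auto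

lemma E_orth: "i mod n \<noteq> j mod n \<Longrightarrow> E i * E j = 0"
  unfolding E_def by (rule e_orthogonal[OF E_index E_index]) simp

lemma E_idem_left: "E i * (E i * x) = E i * x" by (simp add: mult.assoc[symmetric] E_idem)

lemma E_orth_left: "i mod n \<noteq> j mod n \<Longrightarrow> E i * (E j * x) = 0"
  by (simp add: mult.assoc[symmetric] E_orth)

lemma E_n: "E n = E 0" unfolding E_def by simp

lemma u_inverse: "st u * u = 1" "u * st u = 1" using unitary_u unfolding unitary_def by auto

lemma E_mult_u: "E i * u = u * E (Suc i)"
proof -
  have "st u * E i * u = E (Suc i)"
  proof -
    have "st u * E i * u = e (if i mod n + 1 = n then 1 else i mod n + 1 + 1)"
      unfolding E_def by (rule u_rotates_e[OF E_index])
    also have "\<dots> = E (Suc i)" unfolding E_def using n_pos by (simp add: mod_Suc)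
    finally show ?thesis .
  qed
  then have "u * (st u * E i * u) = u * E (Suc i)" by simp
  then show ?thesis by (simp add: mult.assoc[symmetric] u_inverse)
qed

lemma E_mult_power_u: "E i * u ^ k = u ^ k * E (i + k)"
proof (induct k arbitrary: i)
  case (Suc k)
  have "E i * u ^ Suc k = (E i * u) * u ^ k" by (simp add: mult.assoc)
  also have "\<dots> = u * (E (Suc i) * u ^ k)" by (simp add: E_mult_u mult.assoc)
  also have "\<dots> = u ^ Suc k * E (i + Suc k)" using Suc[of "Suc i"] by (simp add: mult.assoc)
  finally show ?case .
qed simp

lemma power_u_st_power_u: "u ^ k * st u ^ k = 1" "st u ^ k * u ^ k = 1"
proof -
  show "u ^ k * st u ^ k = 1"
  proof (induct k)
    case (Suc k)
    have "u ^ Suc k * st u ^ Suc k = u ^ k * (u * st u) * st u ^ k"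
      by (simp only: power_Suc2[of u k] power_Suc[of "st u" k] mult.assoc)
    then show ?case using Suc u_inverse by simp
  qed simp
  show "st u ^ k * u ^ k = 1"
  proof (induct k)
    case (Suc k)
    have "st u ^ Suc k * u ^ Suc k = st u ^ k * (st u * u) * u ^ k"
      by (simp only: power_Suc2[of "st u" k] power_Suc[of u k] mult.assoc)
    then show ?case using Suc u_inverse by simp
  qed simp
qed

lemma power_u_cancel: "u ^ k * (st u ^ k * x) = x" "st u ^ k * (u ^ k * x) = x"
  by (simp_all add: mult.assoc[symmetric] power_u_st_power_u)

definition R :: "nat \<Rightarrow> 'a" where "R j = u ^ j * E j"

lemma R_eq: "R j = E 0 * u ^ j" unfolding R_def using E_mult_power_u[of 0 j] by simp

lemma st_R: "st (R j) = E j * st u ^ j" unfolding R_def by (simp add: st_mult st_power st_E)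

lemma R_mult_st_R: "j < n \<Longrightarrow> k < n \<Longrightarrow> R j * st (R k) = (if j = k then E 0 else 0)"
proof -
  assume jk: "j < n" "k < n"
  have "R j * st (R k) = u ^ j * (E j * E k) * st u ^ k" unfolding st_R unfolding R_def by (simp add: mult.assoc)
  moreover have "j \<noteq> k \<Longrightarrow> E j * E k = 0" using jk by (intro E_orth) simp
  moreover have "u ^ j * E j * st u ^ j = E 0"
    using R_eq[of j] unfolding R_def by (simp add: mult.assoc power_u_st_power_u)
  ultimately show ?thesis by (cases "j = k") (simp_all add: E_idem)
qed

lemma st_R_mult_R: "st (R j) * R j = E j"
  unfolding st_R unfolding R_def by (simp add: mult.assoc power_u_cancel E_idem)

lemma R_mult_E: "k < n \<Longrightarrow> j < n \<Longrightarrow> R j * E k = (if j = k then R j else 0)"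
  unfolding R_def using E_orth[of j k] by (simp add: mult.assoc E_idem)

lemma E_mult_st_R: "k < n \<Longrightarrow> j < n \<Longrightarrow> E k * st (R j) = (if j = k then st (R j) else 0)"
proof -
  assume "k < n" "j < n"
  then have "st (R j * E k) = st (if j = k then R j else 0)" using R_mult_E by simp
  then show ?thesis by (simp add: st_mult st_E split: if_splits)
qed

definition p :: 'a where "p = (\<Sum>j<n. E j)"

lemma p_eq_sum: "p = (\<Sum>i=1..n. e i)"
proof -
  have "(\<Sum>i=1..n. e i) = (\<Sum>i=Suc 0..Suc (n-1). e i)" using n_pos by simp
  also have "\<dots> = (\<Sum>j=0..n-1. e (Suc j))" by (rule sum.shift_bounds_cl_Suc_ivl)
  also have "{0..n-1} = {..<n}" using n_pos by auto
  finally have "(\<Sum>i=1..n. e i) = (\<Sum>j<n. e (Suc j))" .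
  also have "\<dots> = (\<Sum>j<n. E j)" unfolding E_def by (intro sum.cong) auto
  finally show ?thesis unfolding p_def by simp
qed

lemma sum_st_R_mult_R: "(\<Sum>j<n. st (R j) * R j) = p" unfolding p_def by (simp add: st_R_mult_R)

lemma R_mult_p: "j < n \<Longrightarrow> R j * p = R j"
  unfolding p_def by (simp add: sum_distrib_left R_mult_E)

lemma p_mult_st_R: "j < n \<Longrightarrow> p * st (R j) = st (R j)"
  unfolding p_def by (simp add: sum_distrib_right E_mult_st_R)

lemma st_p: "st p = p" unfolding p_def by (simp add: st_sum st_E)

lemma E_mult_p: "j < n \<Longrightarrow> E j * p = E j"
proof -
  assume j: "j < n"
  have "E j * p = (\<Sum>k<n. if k = j then E j else 0)"
    unfolding p_def sum_distrib_left using j by (intro sum.cong) (auto simp: E_idem E_orth)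
  then show ?thesis using j by simp
qed

lemma p_idem: "p * p = p"
proof -
  have "p * p = (\<Sum>j<n. E j * p)" by (subst (1) p_def) (simp add: sum_distrib_right)
  also have "\<dots> = (\<Sum>j<n. E j)" by (simp add: E_mult_p)
  finally show ?thesis unfolding p_def[symmetric] .
qed

definition w :: 'a where "w = u ^ n * E 0"

sublocale W: corner_unitary sc st "E 0" w
proof
  show "st (E 0) = E 0" by (rule st_E)
  show "E 0 * E 0 = E 0" by (rule E_idem)
  have c: "E 0 * u ^ n = u ^ n * E 0" using E_mult_power_u[of 0 n] E_n by simp
  show "E 0 * w = w" unfolding w_def by (simp add: mult.assoc[symmetric] c) (simp add: mult.assoc E_idem)
  show "w * E 0 = w" unfolding w_def by (simp add: mult.assoc E_idem)
  show "st w * w = E 0" unfolding w_def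
    by (simp add: st_mult st_power st_E mult.assoc) (simp add: mult.assoc[symmetric] power_u_st_power_u E_idem)
  have "w * st w = u ^ n * (E 0 * E 0) * st u ^ n" unfolding w_def
    by (simp add: st_mult st_power st_E mult.assoc)
  also have "\<dots> = (E 0 * u ^ n) * st u ^ n" by (simp add: E_idem c)
  also have "\<dots> = E 0" by (simp add: mult.assoc power_u_st_power_u)
  finally show "w * st w = E 0" .
qed

lemma p_mult_E: "k < n \<Longrightarrow> p * E k = E k"
  using arg_cong[OF E_mult_p[of k], of st] by (simp add: st_mult st_p st_E)

lemma R_mult_u: "R i * u = u ^ Suc i * E (Suc i)"
  unfolding R_def by (simp add: mult.assoc E_mult_u) (simp add: mult.assoc[symmetric] power_Suc2[symmetric] del: power_Suc2)

lemma R_mult_u_less: "Suc i < n \<Longrightarrow> R i * u = R (Suc i)"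
  unfolding R_mult_u by (simp add: R_def)

lemma R_mult_u_last: "Suc i = n \<Longrightarrow> R i * u = w"
  unfolding R_mult_u w_def using E_n by simp

lemma w_mult_st_R: "j < n \<Longrightarrow> w * st (R j) = (if j = 0 then w else 0)"
proof -
  assume j: "j < n"
  have "w * st (R j) = u ^ n * (E 0 * (E j * st u ^ j))" unfolding w_def st_R by (simp add: mult.assoc)
  then show ?thesis using j by (cases "j = 0") (simp_all add: E_idem E_idem_left E_orth_left w_def)
qed

definition generators :: "'a set" where
  "generators = e ` {1..n} \<union> (\<lambda>i. e i * u * e (i + 1)) ` {1..n-1} \<union> {p * u * p}"

text \<open>The n \<times> n matrices over C*(w), realised inside p A p through the matrix units R j.\<close>

definition matrix_algebra :: "'a set" where
  "matrix_algebra = {x. p * x * p = x \<and> (\<forall>i<n. \<forall>j<n. R i * x * st (R j) \<in> W.Cstar_z)}"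

lemma e_eq_E: "i \<in> {1..n} \<Longrightarrow> e i = E (i - 1)"
proof -
  assume i: "i \<in> {1..n}"
  then have "i - 1 < n" by auto
  then have "(i - 1) mod n + 1 = i" using i by simp
  then show ?thesis unfolding E_def by simp
qed

lemma matrix_decomposition:
  assumes "p * x * p = x"
  shows "x = (\<Sum>i<n. \<Sum>j<n. st (R i) * (R i * x * st (R j)) * R j)"
proof -
  have "x = p * x * p" using assms by simp
  also have "\<dots> = (\<Sum>i<n. st (R i) * R i) * x * (\<Sum>j<n. st (R j) * R j)" by (simp add: sum_st_R_mult_R)
  also have "\<dots> = (\<Sum>i<n. \<Sum>j<n. st (R i) * (R i * x * st (R j)) * R j)"
    by (simp add: sum_distrib_right) (simp add: sum_distrib_left mult.assoc)
  finally show ?thesis .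
qed

lemma matrix_algebra_p: "x \<in> matrix_algebra \<Longrightarrow> p * x = x" "x \<in> matrix_algebra \<Longrightarrow> x * p = x"
proof -
  assume "x \<in> matrix_algebra"
  then have x: "p * x * p = x" unfolding matrix_algebra_def by simp
  have "p * x = p * (p * x * p)" using x by simp
  also have "\<dots> = p * x * p" by (simp add: mult.assoc[symmetric] p_idem)
  finally show "p * x = x" using x by simp
  have "x * p = (p * x * p) * p" using x by simp
  also have "\<dots> = p * x * p" by (simp add: mult.assoc p_idem)
  finally show "x * p = x" using x by simp
qed

lemma matrix_entry_mult:
  assumes "x \<in> matrix_algebra" "i < n" "j < n"
  shows "R i * (x * y) * st (R j) = (\<Sum>k<n. (R i * x * st (R k)) * (R k * y * st (R j)))"
proof -
  have "R i * (x * y) * st (R j) = R i * x * p * y * st (R j)"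
    using matrix_algebra_p(2)[OF assms(1)] by (simp add: mult.assoc)
  also have "\<dots> = R i * x * (\<Sum>k<n. st (R k) * R k) * y * st (R j)" by (simp add: sum_st_R_mult_R)
  also have "\<dots> = (\<Sum>k<n. (R i * x * st (R k)) * (R k * y * st (R j)))"
    by (simp add: sum_distrib_left sum_distrib_right mult.assoc)
  finally show ?thesis .
qed

lemma matrix_algebraI:
  assumes "p * x * p = x" "\<And>i j. i < n \<Longrightarrow> j < n \<Longrightarrow> R i * x * st (R j) \<in> W.Cstar_z"
  shows "x \<in> matrix_algebra"
  using assms unfolding matrix_algebra_def by blast

lemma matrix_algebraD:
  assumes "x \<in> matrix_algebra"
  shows "p * x * p = x" "i < n \<Longrightarrow> j < n \<Longrightarrow> R i * x * st (R j) \<in> W.Cstar_z"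
  using assms unfolding matrix_algebra_def by blast+

lemma matrix_algebra_add:
  assumes "x \<in> matrix_algebra" "y \<in> matrix_algebra"
  shows "x + y \<in> matrix_algebra"
proof (rule matrix_algebraI)
  show "p * (x + y) * p = x + y"
    using matrix_algebraD(1)[OF assms(1)] matrix_algebraD(1)[OF assms(2)]
    by (simp add: distrib_left distrib_right)
  show "R i * (x + y) * st (R j) \<in> W.Cstar_z" if "i < n" "j < n" for i j
    using W.Cstar_z_add[OF matrix_algebraD(2)[OF assms(1) that] matrix_algebraD(2)[OF assms(2) that]]
    by (simp add: distrib_left distrib_right)
qed

lemma matrix_algebra_mult:
  assumes "x \<in> matrix_algebra" "y \<in> matrix_algebra"
  shows "x * y \<in> matrix_algebra"
proof (rule matrix_algebraI)
  show "p * (x * y) * p = x * y"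
    using matrix_algebra_p[OF assms(1)] matrix_algebra_p[OF assms(2)] by (metis mult.assoc)
  show "R i * (x * y) * st (R j) \<in> W.Cstar_z" if ij: "i < n" "j < n" for i j
  proof -
    have "(\<Sum>k<n. (R i * x * st (R k)) * (R k * y * st (R j))) \<in> W.Cstar_z"
      using W.Cstar_z_sum[of "{..<n}" "\<lambda>k. (R i * x * st (R k)) * (R k * y * st (R j))"]
        W.Cstar_z_mult[OF matrix_algebraD(2)[OF assms(1)] matrix_algebraD(2)[OF assms(2)]] ij
      by auto
    then show ?thesis using matrix_entry_mult[OF assms(1) ij] by simp
  qed
qed

lemma matrix_algebra_sc:
  assumes "x \<in> matrix_algebra"
  shows "sc c x \<in> matrix_algebra"
proof (rule matrix_algebraI)
  show "p * sc c x * p = sc c x"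
    using matrix_algebraD(1)[OF assms] by (simp add: sc_mult_left sc_mult_right)
  show "R i * sc c x * st (R j) \<in> W.Cstar_z" if "i < n" "j < n" for i j
    using W.Cstar_z_sc[OF matrix_algebraD(2)[OF assms that]] by (simp add: sc_mult_left sc_mult_right)
qed

lemma matrix_algebra_st:
  assumes "x \<in> matrix_algebra"
  shows "st x \<in> matrix_algebra"
proof (rule matrix_algebraI)
  show "p * st x * p = st x"
    using arg_cong[OF matrix_algebraD(1)[OF assms], of st] by (simp add: st_mult st_p mult.assoc)
  show "R i * st x * st (R j) \<in> W.Cstar_z" if "i < n" "j < n" for i j
    using W.Cstar_z_st[OF matrix_algebraD(2)[OF assms that(2,1)]] by (simp add: st_mult st_st mult.assoc)
qed

lemma star_subalgebra_matrix_algebra: "star_subalgebra sc st matrix_algebra"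
  unfolding star_subalgebra_def
  using matrix_algebra_add matrix_algebra_mult matrix_algebra_sc matrix_algebra_st
    matrix_algebraI[of 0] W.zero_in_Cstar_z by auto

lemma closed_matrix_algebra: "closed matrix_algebra"
proof -
  have eq: "matrix_algebra = (\<lambda>x. p * x * p - x) -` {0} \<inter> (\<Inter>i\<in>{..<n}. \<Inter>j\<in>{..<n}. (\<lambda>x. R i * x * st (R j)) -` W.Cstar_z)"
    unfolding matrix_algebra_def by auto
  show ?thesis unfolding eq
    by (intro closed_Int closed_INT ballI closed_vimage W.closed_Cstar_z closed_singleton continuous_intros)
qed

lemma E_in_matrix_algebra:
  assumes "k < n"
  shows "E k \<in> matrix_algebra"
proof (rule matrix_algebraI)
  show "p * E k * p = E k" using assms by (simp add: p_mult_E E_mult_p mult.assoc)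
  show "R i * E k * st (R j) \<in> W.Cstar_z" if "i < n" "j < n" for i j
    using assms that W.e_in_Cstar_z W.zero_in_Cstar_z by (simp add: R_mult_E R_mult_st_R)
qed

lemma E_u_E_in_matrix_algebra:
  assumes "Suc k < n"
  shows "E k * u * E (Suc k) \<in> matrix_algebra"
proof (rule matrix_algebraI)
  show "p * (E k * u * E (Suc k)) * p = E k * u * E (Suc k)"
    using assms by (simp add: mult.assoc[symmetric] p_mult_E) (simp add: mult.assoc E_mult_p)
  show "R i * (E k * u * E (Suc k)) * st (R j) \<in> W.Cstar_z" if ij: "i < n" "j < n" for i j
  proof -
    have "R i * (E k * u * E (Suc k)) * st (R j) = (if i = k then R k * u * (E (Suc k) * st (R j)) else 0)"
      using assms ij by (simp add: mult.assoc[symmetric] R_mult_E)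
    also have "\<dots> = (if i = k \<and> j = Suc k then R (Suc k) * st (R j) else 0)"
      using assms ij by (simp add: E_mult_st_R R_mult_u_less)
    finally show ?thesis using assms ij W.e_in_Cstar_z W.zero_in_Cstar_z by (simp add: R_mult_st_R)
  qed
qed

lemma p_u_p_in_matrix_algebra: "p * u * p \<in> matrix_algebra"
proof (rule matrix_algebraI)
  show "p * (p * u * p) * p = p * u * p" by (simp add: mult.assoc p_idem) (simp add: mult.assoc[symmetric] p_idem)
  show "R i * (p * u * p) * st (R j) \<in> W.Cstar_z" if ij: "i < n" "j < n" for i j
  proof -
    have "R i * (p * u * p) * st (R j) = R i * u * st (R j)"
      using ij by (simp add: mult.assoc[symmetric] R_mult_p) (simp add: mult.assoc p_mult_st_R)
    moreover have "R i * u = (if Suc i < n then R (Suc i) else w)"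
      using ij by (simp add: R_mult_u_less R_mult_u_last)
    ultimately show ?thesis using ij W.e_in_Cstar_z W.z_in_Cstar_z W.zero_in_Cstar_z
      by (simp add: R_mult_st_R w_mult_st_R)
  qed
qed

lemma generators_subset_matrix_algebra: "generators \<subseteq> matrix_algebra"
proof
  fix x assume "x \<in> generators"
  then consider (E) i where "i \<in> {1..n}" "x = E (i - 1)"
    | (E_u_E) i where "i \<in> {1..n-1}" "x = E (i - 1) * u * E (Suc (i - 1))"
    | (p_u_p) "x = p * u * p"
    unfolding generators_def using e_eq_E[of "_ + 1"] by (auto simp: e_eq_E)
  then show "x \<in> matrix_algebra"
  proof cases
    case (E i)
    then show ?thesis using E_in_matrix_algebra[of "i - 1"] by auto
  next
    case (E_u_E i)
    then show ?thesis using E_u_E_in_matrix_algebra[of "i - 1"] by auto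
  qed (use p_u_p_in_matrix_algebra in simp)
qed

context
  fixes B assumes B: "star_subalgebra sc st B" "generators \<subseteq> B"
begin

lemma mult_in_subalgebra: "x \<in> B \<Longrightarrow> y \<in> B \<Longrightarrow> x * y \<in> B"
  and st_in_subalgebra: "x \<in> B \<Longrightarrow> st x \<in> B"
  using B(1) unfolding star_subalgebra_def by auto

lemma E_in_subalgebra:
  assumes "k < n"
  shows "E k \<in> B"
proof -
  have "e (Suc k) \<in> generators" using assms unfolding generators_def by auto
  then show ?thesis using B(2) e_eq_E[of "Suc k"] assms by auto
qed

lemma E_u_E_in_subalgebra:
  assumes "Suc k < n"
  shows "E k * u * E (Suc k) \<in> B"
proof -
  have "e (Suc k) * u * e (Suc k + 1) \<in> generators" using assms unfolding generators_def by auto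
  then show ?thesis using B(2) e_eq_E[of "Suc k"] e_eq_E[of "Suc (Suc k)"] assms by auto
qed

lemma R_in_subalgebra: "j < n \<Longrightarrow> R j \<in> B"
proof (induct j)
  case 0
  show ?case using E_in_subalgebra[of 0] 0 by (simp add: R_def)
next
  case (Suc j)
  have "R (Suc j) = R j * (E j * u * E (Suc j))"
    using Suc(2) by (simp add: mult.assoc[symmetric] R_mult_E R_mult_u_less)
  then show ?case using Suc E_u_E_in_subalgebra mult_in_subalgebra by simp
qed

lemma w_in_subalgebra: "w \<in> B"
proof -
  have n: "n - 1 < n" "Suc (n - 1) = n" using n_pos by auto
  have "R (n - 1) * (E (n - 1) * (p * u * p) * E 0) = (R (n - 1) * E (n - 1)) * p * u * (p * E 0)"
    by (simp add: mult.assoc)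
  also have "\<dots> = w" using n n_pos W.z_e by (simp add: R_mult_E R_mult_p p_mult_E R_mult_u_last)
  finally have "R (n - 1) * (E (n - 1) * (p * u * p) * E 0) = w" .
  moreover have "p * u * p \<in> B" using B(2) unfolding generators_def p_eq_sum by auto
  then have "R (n - 1) * (E (n - 1) * (p * u * p) * E 0) \<in> B"
    using E_in_subalgebra[of 0] E_in_subalgebra[OF n(1)] R_in_subalgebra[OF n(1)] n_pos
    by (simp add: mult_in_subalgebra)
  ultimately show ?thesis by simp
qed

lemma matrix_algebra_subset:
  assumes "closed B"
  shows "matrix_algebra \<subseteq> B"
proof
  fix x assume x: "x \<in> matrix_algebra"
  have "W.Cstar_z \<subseteq> B"
    using W.Cstar_z_minimal[OF assms B(1) E_in_subalgebra w_in_subalgebra] n_pos by simp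
  then have "st (R i) * (R i * x * st (R j)) * R j \<in> B" if "i < n" "j < n" for i j
    using x that unfolding matrix_algebra_def
    by (blast intro: mult_in_subalgebra st_in_subalgebra R_in_subalgebra)
  then have "(\<Sum>i<n. \<Sum>j<n. st (R i) * (R i * x * st (R j)) * R j) \<in> B"
    by (intro star_subalgebra_sum[OF B(1)]) auto
  then show "x \<in> B" using x matrix_decomposition unfolding matrix_algebra_def by simp
qed

end

lemma cstar_generated_eq_matrix_algebra: "cstar_generated sc st generators = matrix_algebra"
  unfolding cstar_generated_def
proof (rule antisym)
  show "\<Inter>{B. generators \<subseteq> B \<and> closed B \<and> star_subalgebra sc st B} \<subseteq> matrix_algebra"
    by (rule Inter_lower)
      (simp add: generators_subset_matrix_algebra closed_matrix_algebra star_subalgebra_matrix_algebra)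
  show "matrix_algebra \<subseteq> \<Inter>{B. generators \<subseteq> B \<and> closed B \<and> star_subalgebra sc st B}"
    using matrix_algebra_subset by blast
qed

definition to_matrix :: "'a \<Rightarrow> complex \<Rightarrow> nat \<Rightarrow> nat \<Rightarrow> complex" where
  "to_matrix x = (\<lambda>l i j. if l \<in> W.spec_z \<and> i < n \<and> j < n then W.gelfand l (R i * x * st (R j)) else 0)"

lemma to_matrix_in_CX_Mn: "x \<in> matrix_algebra \<Longrightarrow> to_matrix x \<in> CX_Mn W.spec_z n"
  unfolding CX_Mn_def
proof (intro CollectI conjI allI impI)
  fix i j assume x: "x \<in> matrix_algebra" and ij: "i < n" "j < n"
  have "continuous_on W.spec_z (\<lambda>l. W.gelfand l (R i * x * st (R j)))" by (rule W.continuous_on_gelfand[OF matrix_algebraD(2)[OF x ij]])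
  then show "continuous_on W.spec_z (\<lambda>l. to_matrix x l i j)"
    by (rule continuous_on_cong[THEN iffD1, rotated 2]) (simp_all add: to_matrix_def ij)
next
  fix l i j assume "l \<notin> W.spec_z \<or> \<not> (i < n \<and> j < n)"
  then show "to_matrix x l i j = 0" unfolding to_matrix_def by auto
qed

lemma to_matrix_add:
  "x \<in> matrix_algebra \<Longrightarrow> y \<in> matrix_algebra \<Longrightarrow> to_matrix (x + y) = CX_Mn_add (to_matrix x) (to_matrix y)"
  unfolding CX_Mn_add_def
proof (intro ext)
  fix l i j assume x: "x \<in> matrix_algebra" and y: "y \<in> matrix_algebra"
  show "to_matrix (x + y) l i j = to_matrix x l i j + to_matrix y l i j"
  proof (cases "l \<in> W.spec_z \<and> i < n \<and> j < n")
    case True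
    then show ?thesis using W.Cstar_z_add[OF matrix_algebraD(2)[OF x] matrix_algebraD(2)[OF y]] unfolding to_matrix_def
      by (simp add: distrib_left distrib_right)
  qed (auto simp: to_matrix_def)
qed

lemma to_matrix_mult:
  "x \<in> matrix_algebra \<Longrightarrow> y \<in> matrix_algebra \<Longrightarrow> to_matrix (x * y) = CX_Mn_mult n (to_matrix x) (to_matrix y)"
  unfolding CX_Mn_mult_def
proof (intro ext)
  fix l i j assume x: "x \<in> matrix_algebra" and y: "y \<in> matrix_algebra"
  show "to_matrix (x * y) l i j = (\<Sum>k<n. to_matrix x l i k * to_matrix y l k j)"
  proof (cases "l \<in> W.spec_z \<and> i < n \<and> j < n")
    case True
    then have ij: "l \<in> W.spec_z" "i < n" "j < n" by auto
    have s: "(\<Sum>k<n. (R i * x * st (R k)) * (R k * y * st (R j))) \<in> W.Cstar_z \<and>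
      (\<forall>l\<in>W.spec_z. W.gelfand l (\<Sum>k<n. (R i * x * st (R k)) * (R k * y * st (R j))) =
        (\<Sum>k<n. W.gelfand l ((R i * x * st (R k)) * (R k * y * st (R j)))))"
      using ij W.Cstar_z_mult[OF matrix_algebraD(2)[OF x] matrix_algebraD(2)[OF y]] by (intro W.Cstar_z_sum) auto
    have "to_matrix (x * y) l i j = W.gelfand l (\<Sum>k<n. (R i * x * st (R k)) * (R k * y * st (R j)))"
      unfolding to_matrix_def using ij matrix_entry_mult[OF x ij(2,3)] by simp
    also have "\<dots> = (\<Sum>k<n. W.gelfand l ((R i * x * st (R k)) * (R k * y * st (R j))))" using s ij by simp
    also have "\<dots> = (\<Sum>k<n. to_matrix x l i k * to_matrix y l k j)"
      using ij W.Cstar_z_mult[OF matrix_algebraD(2)[OF x] matrix_algebraD(2)[OF y]] unfolding to_matrix_def by (intro sum.cong) auto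
    finally show ?thesis .
  next
    case False
    have "to_matrix (x * y) l i j = 0" using False unfolding to_matrix_def by auto
    moreover have "(\<Sum>k<n. to_matrix x l i k * to_matrix y l k j) = 0" using False unfolding to_matrix_def by (intro sum.neutral) auto
    ultimately show ?thesis by simp
  qed
qed

lemma to_matrix_sc: "x \<in> matrix_algebra \<Longrightarrow> to_matrix (sc c x) = CX_Mn_scale c (to_matrix x)"
  unfolding CX_Mn_scale_def
proof (intro ext)
  fix l i j assume x: "x \<in> matrix_algebra"
  show "to_matrix (sc c x) l i j = c * to_matrix x l i j"
  proof (cases "l \<in> W.spec_z \<and> i < n \<and> j < n")
    case True
    then show ?thesis using W.Cstar_z_sc[OF matrix_algebraD(2)[OF x], of _ _ c] unfolding to_matrix_def
      by (simp add: sc_mult_left sc_mult_right)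
  qed (auto simp: to_matrix_def)
qed

lemma to_matrix_st: "x \<in> matrix_algebra \<Longrightarrow> to_matrix (st x) = CX_Mn_star (to_matrix x)"
  unfolding CX_Mn_star_def
proof (intro ext)
  fix l i j assume x: "x \<in> matrix_algebra"
  show "to_matrix (st x) l i j = cnj (to_matrix x l j i)"
  proof (cases "l \<in> W.spec_z \<and> i < n \<and> j < n")
    case True
    have "R i * st x * st (R j) = st (R j * x * st (R i))" by (simp add: st_mult st_st mult.assoc)
    then show ?thesis using True W.Cstar_z_st[OF matrix_algebraD(2)[OF x, of j i]] unfolding to_matrix_def by auto
  qed (auto simp: to_matrix_def)
qed

lemma inj_on_to_matrix: "inj_on to_matrix matrix_algebra"
proof (rule inj_onI)
  fix x y assume x: "x \<in> matrix_algebra" and y: "y \<in> matrix_algebra" and eq: "to_matrix x = to_matrix y"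
  have c: "R i * x * st (R j) = R i * y * st (R j)" if ij: "i < n" "j < n" for i j
  proof -
    define d where "d = R i * x * st (R j) + sc (-1) (R i * y * st (R j))"
    have dy: "sc (-1) (R i * y * st (R j)) \<in> W.Cstar_z" using W.Cstar_z_sc[OF matrix_algebraD(2)[OF y ij]] by simp
    have "d \<in> W.Cstar_z" unfolding d_def using W.Cstar_z_add[OF matrix_algebraD(2)[OF x ij] dy] by simp
    moreover have "W.gelfand l d = 0" if l: "l \<in> W.spec_z" for l
    proof -
      have "to_matrix x l i j = to_matrix y l i j" using eq by simp
      then have "W.gelfand l (R i * x * st (R j)) = W.gelfand l (R i * y * st (R j))"
        unfolding to_matrix_def using l ij by simp
      then show ?thesis unfolding d_def using W.Cstar_z_add[OF matrix_algebraD(2)[OF x ij] dy] W.Cstar_z_sc[OF matrix_algebraD(2)[OF y ij]] l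
        by simp
    qed
    ultimately have "d = 0" by (rule W.gelfand_zero_imp_zero)
    then show ?thesis unfolding d_def by (simp add: sc_minus_left)
  qed
  have "x = (\<Sum>i<n. \<Sum>j<n. st (R i) * (R i * x * st (R j)) * R j)"
    using x unfolding matrix_algebra_def by (intro matrix_decomposition) simp
  also have "\<dots> = (\<Sum>i<n. \<Sum>j<n. st (R i) * (R i * y * st (R j)) * R j)"
    using c by (intro sum.cong refl) simp
  also have "\<dots> = y" using y unfolding matrix_algebra_def by (intro matrix_decomposition[symmetric]) simp
  finally show "x = y" .
qed

lemma matrix_entry_sum:
  assumes "\<And>i j. i < n \<Longrightarrow> j < n \<Longrightarrow> d i j \<in> W.Cstar_z" "k < n" "m < n"
  shows "R k * (\<Sum>i<n. \<Sum>j<n. st (R i) * d i j * R j) * st (R m) = d k m"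
proof -
  have "R k * (\<Sum>i<n. \<Sum>j<n. st (R i) * d i j * R j) * st (R m)
      = (\<Sum>i<n. \<Sum>j<n. (R k * st (R i)) * d i j * (R j * st (R m)))"
    by (simp add: sum_distrib_left sum_distrib_right mult.assoc)
  also have "\<dots> = (\<Sum>i<n. \<Sum>j<n. if j = m then (if i = k then E 0 * d k m * E 0 else 0) else 0)"
    using assms(2,3) by (intro sum.cong refl) (auto simp: R_mult_st_R)
  also have "\<dots> = E 0 * d k m * E 0"
    using assms(2,3) by (simp add: sum.delta)
  also have "\<dots> = d k m" using W.Cstar_z_corner assms by simp
  finally show ?thesis .
qed

lemma sum_in_matrix_algebra:
  assumes "\<And>i j. i < n \<Longrightarrow> j < n \<Longrightarrow> d i j \<in> W.Cstar_z"
  shows "(\<Sum>i<n. \<Sum>j<n. st (R i) * d i j * R j) \<in> matrix_algebra"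
proof (rule matrix_algebraI)
  show "p * (\<Sum>i<n. \<Sum>j<n. st (R i) * d i j * R j) * p = (\<Sum>i<n. \<Sum>j<n. st (R i) * d i j * R j)"
    by (simp add: sum_distrib_left sum_distrib_right mult.assoc[symmetric] p_mult_st_R)
      (simp add: mult.assoc R_mult_p)
  show "R k * (\<Sum>i<n. \<Sum>j<n. st (R i) * d i j * R j) * st (R m) \<in> W.Cstar_z" if "k < n" "m < n" for k m
    using matrix_entry_sum[OF assms that] assms that by simp
qed

lemma to_matrix_surj: "CX_Mn W.spec_z n \<subseteq> to_matrix ` matrix_algebra"
proof
  fix F assume F: "F \<in> CX_Mn W.spec_z n"
  then have Fc: "\<And>i j. i < n \<Longrightarrow> j < n \<Longrightarrow> continuous_on W.spec_z (\<lambda>l. F l i j)"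
    and F0: "\<And>l i j. l \<notin> W.spec_z \<or> \<not> (i < n \<and> j < n) \<Longrightarrow> F l i j = 0"
    unfolding CX_Mn_def by blast+
  define dd where "dd ij = (SOME d. d \<in> W.Cstar_z \<and> (\<forall>l\<in>W.spec_z. W.gelfand l d = F l (fst ij) (snd ij)))" for ij
  have dd: "dd (i, j) \<in> W.Cstar_z \<and> (\<forall>l\<in>W.spec_z. W.gelfand l (dd (i, j)) = F l i j)" if ij: "i < n" "j < n" for i j
  proof -
    from W.gelfand_surj[OF Fc[OF ij]] obtain d where "d \<in> W.Cstar_z" "\<forall>l\<in>W.spec_z. W.gelfand l d = F l i j" by blast
    then show ?thesis unfolding dd_def fst_conv snd_conv
      by (intro someI[of "\<lambda>d. d \<in> W.Cstar_z \<and> (\<forall>l\<in>W.spec_z. W.gelfand l d = F l i j)" d]) simp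
  qed
  define x where "x = (\<Sum>i<n. \<Sum>j<n. st (R i) * dd (i, j) * R j)"
  have entries: "\<And>i j. i < n \<Longrightarrow> j < n \<Longrightarrow> dd (i, j) \<in> W.Cstar_z" using dd by blast
  have comp: "R k * x * st (R m) = dd (k, m)" if "k < n" "m < n" for k m
    using matrix_entry_sum[OF entries that] unfolding x_def .
  have xB: "x \<in> matrix_algebra" unfolding x_def by (rule sum_in_matrix_algebra[OF entries])
  have "to_matrix x = F"
  proof (intro ext)
    fix l i j show "to_matrix x l i j = F l i j"
      using dd comp F0 unfolding to_matrix_def by (cases "l \<in> W.spec_z \<and> i < n \<and> j < n") auto
  qed
  then show "F \<in> to_matrix ` matrix_algebra" by (intro image_eqI[OF _ xB]) simp
qed

lemma star_iso_generated:
  "\<exists>X \<phi>. compact X \<and> X \<subseteq> sphere 0 1 \<and>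
    star_iso_CX_Mn sc st (cstar_generated sc st generators) X n \<phi>"
proof (intro exI conjI)
  show "compact W.spec_z" by (rule W.compact_spec_z)
  show "W.spec_z \<subseteq> sphere 0 1" by (rule W.spec_z_subset_sphere)
  show "star_iso_CX_Mn sc st (cstar_generated sc st generators) W.spec_z n to_matrix"
    unfolding star_iso_CX_Mn_def cstar_generated_eq_matrix_algebra
  proof (intro conjI ballI allI)
    show "bij_betw to_matrix matrix_algebra (CX_Mn W.spec_z n)"
      unfolding bij_betw_def using inj_on_to_matrix to_matrix_in_CX_Mn to_matrix_surj by blast
  qed (simp_all add: to_matrix_add to_matrix_mult to_matrix_sc to_matrix_st)
qed

end

theorem lemma2p13:
  fixes sc :: "complex \<Rightarrow> 'a::{banach, real_normed_algebra_1} \<Rightarrow> 'a"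
    and st :: "'a \<Rightarrow> 'a"
    and e :: "nat \<Rightarrow> 'a" and u :: 'a and n :: nat
  assumes "unital_cstar_algebra sc st"
    and "n \<ge> 1"
    and "\<And>i. i \<in> {1..n} \<Longrightarrow> projection st (e i)"
    and "\<And>i j. i \<in> {1..n} \<Longrightarrow> j \<in> {1..n} \<Longrightarrow> i \<noteq> j \<Longrightarrow> e i * e j = 0"
    and "unitary st u"
    and "\<And>i. i \<in> {1..n} \<Longrightarrow> st u * e i * u = e (if i = n then 1 else i + 1)"
  shows "let p = (\<Sum>i=1..n. e i) in
         \<exists>X \<phi>. compact X \<and> X \<subseteq> sphere 0 1 \<and>
           star_iso_CX_Mn sc st
             (cstar_generated sc st
                (e ` {1..n} \<union> (\<lambda>i. e i * u * e (i + 1)) ` {1..n-1} \<union> {p * u * p}))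
             X n \<phi>"
proof -
  interpret M: cyclic_projections sc st e u n
    by (rule cyclic_projections.intro[OF assms(1)], rule cyclic_projections_axioms.intro) (use assms in auto)
  show ?thesis using M.star_iso_generated unfolding M.generators_def M.p_eq_sum Let_def by simp
qed

end
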